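(* Assume (H1)–(H4) below. Suppose that there is $\lambda_0>0$ such that for every $\lambda\ge\lambda_0$ the coupled Riccati equations, for $i\in\mathcal S$, $s\in[0,T]$ (coefficients at $(s,i)$), $$\begin{aligned}\dot{\mathcal P}_\lambda(s,i)&=-\mathcal P_\lambda(s,i)\widehat A-\widehat A^\top\mathcal P_\lambda(s,i)-G+\begin{pmatrix}\widetilde F^\top\mathcal P_\lambda(s,i)+\widetilde S_1\\\widehat H^\top\mathcal P_\lambda(s,i)+S_2\end{pmatrix}^{\!\top}\begin{pmatrix}\widetilde T_{11}+\mathcal P_\lambda(s,i)&0\\0&T_{22}\end{pmatrix}^{-1}\begin{pmatrix}\widetilde F^\top\mathcal P_\lambda(s,i)+\widetilde S_1\\\widehat H^\top\mathcal P_\lambda(s,i)+S_2\end{pmatrix}\\&\quad+\sum_{k=1}^D\lambda_{ik}(s)\mathcal P_\lambda(s,i)\mathcal P_\lambda(s,k)^{-1}\mathcal P_\lambda(s,i),\qquad\mathcal P_\lambda(T,i)=\lambda I,\end{aligned}$$ admit a solution $(\mathcal P_\lambda(\cdot,1),\dots,\mathcal P_\lambda(\cdot,D))$ with each $\mathcal P_\lambda(\cdot,i)\in C(0,T;\mathbb S^n_+)$ such that for every $i\in\mathcal S$: $\mathcal P_\lambda(\cdot,i)+\widetilde T_{11}(\cdot,i)\gg0$, and $\mathcal P_{\lambda_2}(\cdot,i)\ge\mathcal P_{\lambda_1}(\cdot,i)$ whenever $\lambda_2>\lambda_1\ge\lambda_0$. Then the coupled Riccati equations $$\dot\Sigma(s,i)=\widehat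 A\Sigma(s,i)+\Sigma(s,i)\widehat A^\top+\Sigma(s,i)G\Sigma(s,i)-\sum_{k=1}^D\lambda_{ik}(s)\Sigma(s,k)-\widehat{\mathcal F}(\Sigma(s,i))\widehat{\mathcal T}(\Sigma(s,i))^{-1}\Sigma(s,i)\widehat{\mathcal F}(\Sigma(s,i))^\top-\widehat{\mathcal H}(\Sigma(s,i))T_{22}^{-1}\widehat{\mathcal H}(\Sigma(s,i))^\top,\quad\Sigma(T,i)=0,$$ admit a solution $(\Sigma(\cdot,1),\dots,\Sigma(\cdot,D))$ with $\Sigma(\cdot,i)\in C(0,T;\overline{\mathbb S^n_+})$ and $\widehat{\mathcal T}(\Sigma(\cdot,i))^{-1}\in L^\infty(0,T;\mathbb R^{n\times n})$ for all $i\in\mathcal S$.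
   Context: Let $T>0$ and $(\Omega,\mathcal F,\mathbb P)$ a complete probability space carrying a one-dimensional standard Brownian motion $W$ and an independent continuous-time, finite-state, irreducible Markov chain $\alpha$ with state space $\mathcal S=\{1,\dots,D\}$ and deterministic generator $[\lambda_{ij}(t)]$ ($\lambda_{ij}(t)\ge0$ for $i\ne j$, $\sum_{j}\lambda_{ij}(t)=0$). $\mathbb F$ is the natural filtration of $(W,\alpha)$ augmented by all $\mathbb P$-null sets. $\mathbb S^n$ denotes symmetric $n\times n$ matrices, $\mathbb S^n_+$ the positive definite ones and $\overline{\mathbb S^n_+}$ the positive semidefinite ones; for an $\mathbb S^n$-valued function $F$ on $[0,T]$, $F\gg0$ means $F(s)\ge\delta I$ for a.e. $s$, for some $\delta>0$. $L^\infty(0,T;\mathbb H)$: essentially bounded deterministic functions; $L^2_{\mathbb F}(0,T;\mathbb H)$: $\mathbb F$-progressively measurable processes $\varphi$ with $\mathbb E\int_0^T|\varphi|^2ds<\infty$; $L^2_{\mathcal F_T}(\Omega;\mathbb H)$: square integrable $\mathcal F_T$-measurable random variables; $\mathcal U_k=L^2_{\mathbb F}(0,T;\mathbb R^{m_k})$, $k=1,2$. Game data. State equation: $dX=[A(s,\alpha)X+B_1(s,\alpha)u_1+B_2(s,\alpha)u_2+b(s)]ds+[C(s,\alpha)X+D_1(s,\alpha)u_1+D_2(s,\alpha)u_2+\sigma(s)]dW$, $X(0)=x$, $\alpha(0)=i$. Criterion: $J(x,i;u_1,u_2)=\mathbb E\{\int_0^T[\langle Q(s,\alpha(s))X,X\rangle+\sum_{k=1}^2\langle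 R_k(s,\alpha(s))u_k,u_k\rangle]ds+\langle M(T,\alpha(T))X(T),X(T)\rangle+2\langle m,X(T)\rangle\}$. $J^0$ denotes $J$ with $b=\sigma=0$, $m=0$. (H1) For each $i$: $A(\cdot,i),C(\cdot,i)\in L^\infty(0,T;\mathbb R^{n\times n})$, $B_k(\cdot,i),D_k(\cdot,i)\in L^\infty(0,T;\mathbb R^{n\times m_k})$, $b,\sigma\in L^2_{\mathbb F}(0,T;\mathbb R^n)$. (H2) For each $i$: $Q(\cdot,i)\in L^\infty(0,T;\mathbb S^n)$, $R_k(\cdot,i)\in L^\infty(0,T;\mathbb S^{m_k})$, $M(T,i)\in\mathbb S^n$, $m\in L^2_{\mathcal F_T}(\Omega;\mathbb R^n)$ (no definiteness assumed). (H3) There is $\lambda_F>0$ with $J^0(0,i;u_1,0)\ge\lambda_F\mathbb E\int_0^T|u_1|^2ds$ for all $u_1\in\mathcal U_1$, $i\in\mathcal S$. (H4) There is $\lambda_L>0$ with $J^0(0,i;0,u_2)\le-\lambda_L\mathbb E\int_0^T|u_2|^2ds$ for all $u_2\in\mathcal U_2$, $i\in\mathcal S$. Follower's Riccati solution (known fact taken as given): under (H1)–(H3), the coupled equations $\dot P(s,i)=-P(s,i)A(s,i)-A(s,i)^\top P(s,i)-C(s,i)^\top P(s,i)C(s,i)+\widehat S_1(s,i)^\top\widehat R_1(s,i)^{-1}\widehat S_1(s,i)-Q(s,i)-\sum_{k=1}^D\lambda_{ik}(s)P(s,k)$, $P(T,i)=M(T,i)$, $i\in\mathcal S$, have a unique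 solution with $P(\cdot,i)\in C(0,T;\mathbb S^n)$ and $\widehat R_1(\cdot,i)\gg0$ for all $i$, where $\widehat S_1=B_1^\top P+D_1^\top PC$, $\widehat R_1=R_1+D_1^\top PD_1$; $P$ denotes this solution. Derived coefficients (argument $(s,i)$): $\Xi=D_1^\top PD_2$; $\widehat A=\widehat S_1^\top\widehat R_1^{-1}B_1^\top-A^\top$; $\widehat C=\widehat S_1^\top\widehat R_1^{-1}D_1^\top-C^\top$; $\widehat H=\widehat CPD_2-PB_2$; $G=B_1\widehat R_1^{-1}B_1^\top$; $S_1=D_1\widehat R_1^{-1}B_1^\top$; $S_2=\Xi^\top\widehat R_1^{-1}B_1^\top-B_2^\top$; $T_{11}=D_1\widehat R_1^{-1}D_1^\top$; $T_{21}=T_{12}^\top=\Xi^\top\widehat R_1^{-1}D_1^\top-D_2^\top$; $T_{22}=\Xi^\top\widehat R_1^{-1}\Xi-R_2-D_2^\top PD_2$. Under (H1)–(H4), $T_{22}(\cdot,i)\gg0$ (established separately), so $T_{22}^{-1}$ exists and is bounded. Further: $\widetilde F=\widehat C-\widehat HT_{22}^{-1}T_{21}$; $\widetilde S_1=S_1-T_{12}T_{22}^{-1}S_2$; $\widetilde T_{11}=T_{11}-T_{12}T_{22}^{-1}T_{21}$; and for an $\mathbb S^n$-valued $\Sigma$: $\widehat{\mathcal T}(\Sigma(s,i))=I+\Sigma(s,i)\widetilde T_{11}(s,i)$, $\widehat{\mathcal F}(\Sigma(s,i))=\widetilde F(s,i)+\Sigma(s,i)\widetilde S_1(s,i)^\top$,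 $\widehat{\mathcal H}(\Sigma(s,i))=\widehat H(s,i)+\Sigma(s,i)S_2(s,i)^\top$. *)

theory Defs
  imports "HOL-Analysis.Analysis"
begin

definition symm :: "real^'n^'n \<Rightarrow> bool" where
  "symm M \<longleftrightarrow> transpose M = M"

text \<open>Positive definite (S^n_+) and positive semidefinite (closure of S^n_+) symmetric matrices.\<close>
definition posdef :: "real^'n^'n \<Rightarrow> bool" where
  "posdef M \<longleftrightarrow> symm M \<and> (\<forall>x. x \<noteq> 0 \<longrightarrow> 0 < x \<bullet> (M *v x))"

definition psd :: "real^'n^'n \<Rightarrow> bool" where
  "psd M \<longleftrightarrow> symm M \<and> (\<forall>x. 0 \<le> x \<bullet> (M *v x))"

definition Linf :: "real \<Rightarrow> (real \<Rightarrow> 'a::euclidean_space) \<Rightarrow> bool" where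
  "Linf T f \<longleftrightarrow> set_borel_measurable lborel {0..T} f \<and>
     (\<exists>B. AE s in lborel. s \<in> {0..T} \<longrightarrow> norm (f s) \<le> B)"

definition unif_pos :: "real \<Rightarrow> (real \<Rightarrow> real^'n^'n) \<Rightarrow> bool" where
  "unif_pos T F \<longleftrightarrow> (\<exists>\<delta>>0. AE s in lborel. s \<in> {0..T} \<longrightarrow>
     (\<forall>x. \<delta> * (x \<bullet> x) \<le> x \<bullet> (F s *v x)))"

text \<open>X is a (Caratheodory) solution on [0,T] of dX/ds = F(s), where F(s) is the
  right-hand side already evaluated along X: X is continuous, F is integrable on [0,T]
  and X(t) = X(T) - integral_t^T F for all t in [0,T] (i.e. X absolutely continuous
  with derivative F a.e.).\<close>
definition ode_solution :: "real \<Rightarrow> (real \<Rightarrow> 'a::euclidean_space) \<Rightarrow> (real \<Rightarrow> 'a) \<Rightarrow> bool" where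
  "ode_solution T X F \<longleftrightarrow> continuous_on {0..T} X \<and> set_integrable lborel {0..T} F \<and>
     (\<forall>t\<in>{0..T}. X t = X T - (LINT r:{t..T}|lborel. F r))"

record ('n::finite, 'm1::finite, 'm2::finite) coef =
  cA :: "real^'n^'n"
  cB1 :: "real^'m1^'n"
  cB2 :: "real^'m2^'n"
  cC :: "real^'n^'n"
  cD1 :: "real^'m1^'n"
  cD2 :: "real^'m2^'n"
  cR1 :: "real^'m1^'m1"
  cR2 :: "real^'m2^'m2"
  cP :: "real^'n^'n"

definition mk_coef where
  "mk_coef A B1 B2 C D1 D2 R1 R2 P s i =
     \<lparr>cA = A s i, cB1 = B1 s i, cB2 = B2 s i, cC = C s i, cD1 = D1 s i, cD2 = D2 s i,
      cR1 = R1 s i, cR2 = R2 s i, cP = P s i\<rparr>"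

definition S1hat :: "('n::finite,'m1::finite,'m2::finite) coef \<Rightarrow> real^'n^'m1" where
  "S1hat c = transpose (cB1 c) ** cP c + transpose (cD1 c) ** cP c ** cC c"

definition R1hat :: "('n::finite,'m1::finite,'m2::finite) coef \<Rightarrow> real^'m1^'m1" where
  "R1hat c = cR1 c + transpose (cD1 c) ** cP c ** cD1 c"

definition Xi :: "('n::finite,'m1::finite,'m2::finite) coef \<Rightarrow> real^'m2^'m1" where
  "Xi c = transpose (cD1 c) ** cP c ** cD2 c"

definition Ahat :: "('n::finite,'m1::finite,'m2::finite) coef \<Rightarrow> real^'n^'n" where
  "Ahat c = transpose (S1hat c) ** matrix_inv (R1hat c) ** transpose (cB1 c) - transpose (cA c)"

definition Chat :: "('n::finite,'m1::finite,'m2::finite) coef \<Rightarrow> real^'n^'n" where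
  "Chat c = transpose (S1hat c) ** matrix_inv (R1hat c) ** transpose (cD1 c) - transpose (cC c)"

definition Hhat :: "('n::finite,'m1::finite,'m2::finite) coef \<Rightarrow> real^'m2^'n" where
  "Hhat c = Chat c ** cP c ** cD2 c - cP c ** cB2 c"

definition Gm :: "('n::finite,'m1::finite,'m2::finite) coef \<Rightarrow> real^'n^'n" where
  "Gm c = cB1 c ** matrix_inv (R1hat c) ** transpose (cB1 c)"

definition Sm1 :: "('n::finite,'m1::finite,'m2::finite) coef \<Rightarrow> real^'n^'n" where
  "Sm1 c = cD1 c ** matrix_inv (R1hat c) ** transpose (cB1 c)"

definition Sm2 :: "('n::finite,'m1::finite,'m2::finite) coef \<Rightarrow> real^'n^'m2" where
  "Sm2 c = transpose (Xi c) ** matrix_inv (R1hat c) ** transpose (cB1 c) - transpose (cB2 c)"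

definition T11 :: "('n::finite,'m1::finite,'m2::finite) coef \<Rightarrow> real^'n^'n" where
  "T11 c = cD1 c ** matrix_inv (R1hat c) ** transpose (cD1 c)"

definition T21 :: "('n::finite,'m1::finite,'m2::finite) coef \<Rightarrow> real^'n^'m2" where
  "T21 c = transpose (Xi c) ** matrix_inv (R1hat c) ** transpose (cD1 c) - transpose (cD2 c)"

definition T12 :: "('n::finite,'m1::finite,'m2::finite) coef \<Rightarrow> real^'m2^'n" where
  "T12 c = transpose (T21 c)"

definition T22 :: "('n::finite,'m1::finite,'m2::finite) coef \<Rightarrow> real^'m2^'m2" where
  "T22 c = transpose (Xi c) ** matrix_inv (R1hat c) ** Xi c - cR2 c
           - transpose (cD2 c) ** cP c ** cD2 c"

definition Ftil :: "('n::finite,'m1::finite,'m2::finite) coef \<Rightarrow> real^'n^'n" where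
  "Ftil c = Chat c - Hhat c ** matrix_inv (T22 c) ** T21 c"

definition S1til :: "('n::finite,'m1::finite,'m2::finite) coef \<Rightarrow> real^'n^'n" where
  "S1til c = Sm1 c - T12 c ** matrix_inv (T22 c) ** Sm2 c"

definition T11til :: "('n::finite,'m1::finite,'m2::finite) coef \<Rightarrow> real^'n^'n" where
  "T11til c = T11 c - T12 c ** matrix_inv (T22 c) ** T21 c"

definition That_op :: "('n::finite,'m1::finite,'m2::finite) coef \<Rightarrow> real^'n^'n \<Rightarrow> real^'n^'n" where
  "That_op c X = mat 1 + X ** T11til c"

definition Fhat_op :: "('n::finite,'m1::finite,'m2::finite) coef \<Rightarrow> real^'n^'n \<Rightarrow> real^'n^'n" where
  "Fhat_op c X = Ftil c + X ** transpose (S1til c)"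

definition Hhat_op :: "('n::finite,'m1::finite,'m2::finite) coef \<Rightarrow> real^'n^'n \<Rightarrow> real^'m2^'n" where
  "Hhat_op c X = Hhat c + X ** transpose (Sm2 c)"

end

(*
  Put Sigma_lam = P_lam^-1. Differentiating the inverse along the P_lam-equation shows that
  Sigma_lam solves the Sigma-equation with terminal value (1/lam) I; the quadratic terms match
  because (T11til + P)^-1 = (I + P^-1 T11til)^-1 P^-1. Since P_lam increases with lam, the
  positive semidefinite matrices Sigma_lam decrease and converge pointwise to some Sigma >= 0
  with Sigma(T) = 0. The bound P_lam + T11til >= P_lam0 + T11til >= delta I makes
  (I + Sigma_lam T11til)^-1 = I - (P_lam + T11til)^-1 T11til uniformly bounded, so the
  right-hand sides are uniformly essentially bounded and dominated convergence carries the
  integral equations over to the limit.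
*)
theory Submission
  imports Defs
begin

section \<open>Norm, products and inverses of real matrices\<close>

lemma norm_transpose: "norm (transpose (A::real^'n^'m)) = norm A"
proof -
  have sq: "(norm M)\<^sup>2 = (\<Sum>i\<in>UNIV. \<Sum>j\<in>UNIV. (M$i$j)\<^sup>2)" for M :: "real^'q^'p"
    unfolding norm_vec_def L2_set_def by (simp add: sum_nonneg)
  have "(norm (transpose A))\<^sup>2 = (norm A)\<^sup>2"
    unfolding sq transpose_def by (subst sum.swap) simp
  then show ?thesis by (simp add: power2_eq_iff_nonneg)
qed

lemma norm_matrix_vector_mult_le: "norm ((A::real^'n^'m) *v x) \<le> norm A * norm x"
proof -
  have "norm (A *v x) \<le> norm (\<chi> i. norm (A$i) * norm x)"
    by (rule norm_le_componentwise_cart)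
       (simp add: matrix_vector_mul_component Cauchy_Schwarz_ineq2)
  also have "(\<chi> i. norm (A$i) * norm x) = norm x *\<^sub>R (\<chi> i. norm (A$i))"
    by (simp add: vec_eq_iff mult.commute)
  also have "norm \<dots> = norm x * norm A"
    unfolding norm_scaleR norm_vec_def[of A] norm_vec_def[of "\<chi> i. norm (A$i)"] by simp
  finally show ?thesis by (simp add: mult.commute)
qed

lemma norm_matrix_mult_le: "norm ((A::real^'n^'m) ** (B::real^'p^'n)) \<le> norm A * norm B"
proof -
  have row: "norm ((A ** B)$i) \<le> norm (A$i) * norm B" for i
  proof -
    have "(A ** B)$i = transpose B *v A$i"
      by (simp add: vec_eq_iff matrix_matrix_mult_def matrix_vector_mult_def transpose_def mult.commute)
    then show ?thesis
      using norm_matrix_vector_mult_le[of "transpose B" "A$i"] by (simp add: norm_transpose mult.commute)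
  qed
  have "norm (A ** B) \<le> norm (\<chi> i. norm (A$i) * norm B)"
    by (rule norm_le_componentwise_cart) (simp add: row)
  also have "(\<chi> i. norm (A$i) * norm B) = norm B *\<^sub>R (\<chi> i. norm (A$i))"
    by (simp add: vec_eq_iff mult.commute)
  also have "norm \<dots> = norm B * norm A"
    unfolding norm_scaleR norm_vec_def[of A] norm_vec_def[of "\<chi> i. norm (A$i)"] by simp
  finally show ?thesis by (simp add: mult.commute)
qed

lemma norm_matrix_mult3_le:
  "norm ((A::real^'n^'m) ** (B::real^'p^'n) ** (C::real^'q^'p)) \<le> norm A * norm B * norm C"
  by (meson mult_right_mono norm_ge_zero norm_matrix_mult_le order_trans)

lemma norm_matrix_mult_bound:
  "norm (A::real^'n^'m) \<le> a \<Longrightarrow> norm (B::real^'p^'n) \<le> b \<Longrightarrow> norm (A ** B) \<le> a * b"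
  by (rule order_trans[OF norm_matrix_mult_le mult_mono]) (auto intro: order_trans[OF norm_ge_zero])

lemma bounded_bilinear_matrix_mult: "bounded_bilinear (\<lambda>(A::real^'n^'m) (B::real^'p^'n). A ** B)"
proof
  show "(a + a') ** b = a ** b + a' ** b" for a a' :: "real^'n^'m" and b :: "real^'p^'n"
    by (simp add: matrix_matrix_mult_def vec_eq_iff sum.distrib distrib_right)
  show "a ** (b + b') = a ** b + a ** b'" for a :: "real^'n^'m" and b b' :: "real^'p^'n"
    by (simp add: matrix_add_ldistrib)
  show "(r *\<^sub>R a) ** b = r *\<^sub>R (a ** b)" for r and a :: "real^'n^'m" and b :: "real^'p^'n"
    by (rule scalar_matrix_assoc[symmetric])
  show "a ** (r *\<^sub>R b) = r *\<^sub>R (a ** b)" for r and a :: "real^'n^'m" and b :: "real^'p^'n"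
    by (simp only: matrix_scalar_ac scalar_matrix_assoc)
  show "\<exists>K. \<forall>a b. norm (a ** b) \<le> norm (a::real^'n^'m) * norm (b::real^'p^'n) * K"
    by (rule exI[of _ 1]) (simp add: norm_matrix_mult_le)
qed

lemma bounded_linear_transpose: "bounded_linear (transpose :: real^'n^'m \<Rightarrow> real^'m^'n)"
  by (rule bounded_linear_intro[of _ 1]) (auto simp: vec_eq_iff norm_transpose, auto simp: transpose_def)

lemma bounded_linear_matrix_vector_mult_left: "bounded_linear (\<lambda>M::real^'n^'m. M *v x)"
  by (rule bounded_linear_intro[of _ "norm x"])
     (auto simp: matrix_vector_mult_add_rdistrib scaleR_matrix_vector_assoc norm_matrix_vector_mult_le)

lemmas matrix_mult_distrib =
  bounded_bilinear.add_left[OF bounded_bilinear_matrix_mult]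
  bounded_bilinear.add_right[OF bounded_bilinear_matrix_mult]
  bounded_bilinear.diff_left[OF bounded_bilinear_matrix_mult]
  bounded_bilinear.diff_right[OF bounded_bilinear_matrix_mult]
  bounded_bilinear.minus_left[OF bounded_bilinear_matrix_mult]
  bounded_bilinear.minus_right[OF bounded_bilinear_matrix_mult]
  bounded_bilinear.scaleR_left[OF bounded_bilinear_matrix_mult]
  bounded_bilinear.scaleR_right[OF bounded_bilinear_matrix_mult]
  bounded_bilinear.sum_left[OF bounded_bilinear_matrix_mult]
  bounded_bilinear.sum_right[OF bounded_bilinear_matrix_mult]

lemmas transpose_distrib =
  linear_add[OF bounded_linear.linear[OF bounded_linear_transpose]]
  linear_diff[OF bounded_linear.linear[OF bounded_linear_transpose]]
  transpose_scalar matrix_transpose_mul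

lemmas matrix_mult_tendsto = bounded_bilinear.tendsto[OF bounded_bilinear_matrix_mult]
lemmas transpose_tendsto = bounded_linear.tendsto[OF bounded_linear_transpose]

lemma matrix_inv_left_right:
  assumes "invertible (A::real^'n^'n)"
  shows "matrix_inv A ** A = mat 1 \<and> A ** matrix_inv A = mat 1"
proof -
  have "\<exists>A'. A ** A' = mat 1 \<and> A' ** A = mat 1" using assms by (simp add: invertible_def)
  then have "A ** matrix_inv A = mat 1 \<and> matrix_inv A ** A = mat 1"
    unfolding matrix_inv_def by (rule someI_ex)
  then show ?thesis by simp
qed

lemma matrix_inv_left: "invertible (A::real^'n^'n) \<Longrightarrow> matrix_inv A ** A = mat 1"
  using matrix_inv_left_right by blast

lemma matrix_inv_right: "invertible (A::real^'n^'n) \<Longrightarrow> A ** matrix_inv A = mat 1"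
  using matrix_inv_left_right by blast

lemma matrix_inv_unique:
  assumes "(A::real^'n^'n) ** B = mat 1"
  shows "matrix_inv A = B"
proof -
  have inv: "invertible A" using assms invertible_right_inverse by blast
  have "matrix_inv A = matrix_inv A ** (A ** B)" using assms by simp
  also have "\<dots> = B" by (simp add: matrix_mul_assoc matrix_inv_left[OF inv])
  finally show ?thesis .
qed

lemma invertible_matrix_inv: "invertible (A::real^'n^'n) \<Longrightarrow> invertible (matrix_inv A)"
  using matrix_inv_left matrix_inv_right invertible_def by blast

lemma matrix_inv_matrix_inv: "invertible (A::real^'n^'n) \<Longrightarrow> matrix_inv (matrix_inv A) = A"
  using matrix_inv_unique matrix_inv_left by blast

lemma matrix_inv_mult:
  assumes "invertible (A::real^'n^'n)" "invertible (B::real^'n^'n)"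
  shows "matrix_inv (A ** B) = matrix_inv B ** matrix_inv A"
proof (rule matrix_inv_unique)
  have "A ** B ** (matrix_inv B ** matrix_inv A) = A ** (B ** matrix_inv B) ** matrix_inv A"
    by (simp add: matrix_mul_assoc)
  then show "A ** B ** (matrix_inv B ** matrix_inv A) = mat 1"
    by (simp add: matrix_inv_right assms)
qed

lemma matrix_inv_transpose:
  "invertible (A::real^'n^'n) \<Longrightarrow> matrix_inv (transpose A) = transpose (matrix_inv A)"
  by (rule matrix_inv_unique) (simp add: matrix_transpose_mul[symmetric] matrix_inv_left)

lemma matrix_inv_scaleR_mat_1:
  "c \<noteq> 0 \<Longrightarrow> matrix_inv (c *\<^sub>R (mat 1::real^'n^'n)) = (1/c) *\<^sub>R mat 1"
  by (rule matrix_inv_unique) (simp add: matrix_mult_distrib)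

lemma matrix_inv_not_invertible:
  assumes "\<not> invertible (A::real^'n^'n)"
  shows "matrix_inv A = matrix_inv (0::real^'n^'n)"
proof -
  have "(mat 1 :: real^'n^'n) \<noteq> 0"
  proof
    assume "(mat 1 :: real^'n^'n) = 0"
    then have "(mat 1 :: real^'n^'n) $ i $ i = 0" for i by simp
    then show False by (simp add: mat_def)
  qed
  then have "\<not> invertible (0::real^'n^'n)" by (auto simp: invertible_def)
  then have "(\<lambda>A'. A ** A' = mat 1 \<and> A' ** A = mat 1) =
      (\<lambda>A'. (0::real^'n^'n) ** A' = mat 1 \<and> A' ** 0 = mat 1)"
    using assms unfolding invertible_def by auto
  then show ?thesis unfolding matrix_inv_def by simp
qed

lemma norm_matrix_le_of_operator_bound:
  assumes "\<And>x. norm ((M::real^'n^'m) *v x) \<le> c * norm x"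
  shows "norm M \<le> real CARD('n) * c"
proof -
  have "norm M = norm (transpose M)" by (simp add: norm_transpose)
  also have "\<dots> \<le> (\<Sum>j\<in>UNIV. norm (transpose M $ j))"
    unfolding norm_vec_def[of "transpose M"] by (rule L2_set_le_sum) simp
  also have "\<dots> \<le> (\<Sum>j\<in>(UNIV::'n set). c)"
  proof (rule sum_mono)
    fix j
    have "transpose M $ j = M *v axis j 1"
      by (simp add: vec_eq_iff transpose_def matrix_vector_mul_component inner_axis)
    then show "norm (transpose M $ j) \<le> c" using assms[of "axis j 1"] by simp
  qed
  finally show ?thesis by simp
qed

lemma bounded_below_imp_invertible:
  assumes c: "c > 0" and below: "\<And>x. c * norm x \<le> norm ((M::real^'n^'n) *v x)"
  shows "invertible M" "norm (matrix_inv M) \<le> real CARD('n) / c"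
proof -
  have "inj ((*v) M)"
  proof (rule injI)
    fix x y assume "M *v x = M *v y"
    then have "c * norm (x - y) \<le> 0" using below[of "x - y"] by (simp add: matrix_vector_mult_diff_distrib)
    then show "x = y" using c by (simp add: mult_le_0_iff)
  qed
  then show inv: "invertible M"
    using matrix_left_invertible_injective invertible_left_inverse by blast
  have "norm (matrix_inv M *v y) \<le> 1 / c * norm y" for y
  proof -
    have "c * norm (matrix_inv M *v y) \<le> norm (M *v (matrix_inv M *v y))" by (rule below)
    also have "M *v (matrix_inv M *v y) = y" by (simp add: matrix_vector_mul_assoc matrix_inv_right[OF inv])
    finally show ?thesis using c by (simp add: field_simps)
  qed
  then show "norm (matrix_inv M) \<le> real CARD('n) / c"
    using norm_matrix_le_of_operator_bound by fastforce
qed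

lemma invertible_imp_bounded_below:
  assumes "invertible (M::real^'n^'n)"
  obtains c where "c > 0" "\<And>x. c * norm x \<le> norm (M *v x)"
proof
  show "1 / (norm (matrix_inv M) + 1) > 0" by (simp add: add_nonneg_pos)
  fix x
  have "norm x = norm (matrix_inv M *v (M *v x))"
    by (simp add: matrix_vector_mul_assoc matrix_inv_left[OF assms])
  also have "\<dots> \<le> norm (matrix_inv M) * norm (M *v x)" by (rule norm_matrix_vector_mult_le)
  also have "\<dots> \<le> (norm (matrix_inv M) + 1) * norm (M *v x)" by (simp add: mult_right_mono)
  finally show "1 / (norm (matrix_inv M) + 1) * norm x \<le> norm (M *v x)"
    by (simp add: field_simps add_pos_nonneg)
qed

lemma matrix_inv_locally_lipschitz:
  assumes "invertible (A::real^'n^'n)"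
  obtains d L where "d > 0"
    "\<And>B. norm (B - A) < d \<Longrightarrow> invertible B \<and> norm (matrix_inv B - matrix_inv A) \<le> L * norm (B - A)"
proof -
  obtain c where c: "c > 0" "\<And>x. c * norm x \<le> norm (A *v x)"
    using invertible_imp_bounded_below[OF assms] by blast
  have "invertible B \<and> norm (matrix_inv B - matrix_inv A)
          \<le> real CARD('n) / (c/2) * norm (matrix_inv A) * norm (B - A)"
    if B: "norm (B - A) < c/2" for B
  proof -
    have "c/2 * norm x \<le> norm (B *v x)" for x
    proof -
      have "norm ((B - A) *v x) \<le> c/2 * norm x"
        using norm_matrix_vector_mult_le[of "B - A" x] B
        by (meson less_eq_real_def mult_right_mono norm_ge_zero order_trans)
      moreover have "B *v x = A *v x + (B - A) *v x" by (simp add: matrix_vector_mult_diff_rdistrib)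
      ultimately show ?thesis using c(2)[of x] norm_triangle_ineq2[of "A *v x" "- ((B - A) *v x)"] by simp
    qed
    with c(1) have invB: "invertible B" and bound: "norm (matrix_inv B) \<le> real CARD('n) / (c/2)"
      using bounded_below_imp_invertible[of "c/2" B] by auto
    have "matrix_inv B - matrix_inv A = matrix_inv B ** (A - B) ** matrix_inv A"
      by (simp add: matrix_mult_distrib matrix_inv_left matrix_inv_right assms invB flip: matrix_mul_assoc)
    also have "norm \<dots> \<le> norm (matrix_inv B) * norm (A - B) * norm (matrix_inv A)"
      by (rule norm_matrix_mult3_le)
    also have "\<dots> \<le> real CARD('n) / (c/2) * norm (A - B) * norm (matrix_inv A)"
      using bound by (intro mult_right_mono) auto
    finally show ?thesis using invB by (simp add: norm_minus_commute mult_ac)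
  qed
  then show ?thesis using that[of "c/2" "real CARD('n) / (c/2) * norm (matrix_inv A)"] c(1) by auto
qed

lemma isCont_matrix_inv:
  assumes "invertible (A::real^'n^'n)"
  shows "isCont matrix_inv A"
proof -
  obtain d L where d: "d > 0" and lip:
    "\<And>B. norm (B - A) < d \<Longrightarrow> norm (matrix_inv B - matrix_inv A) \<le> L * norm (B - A)"
    using matrix_inv_locally_lipschitz[OF assms] by metis
  have "eventually (\<lambda>B. norm (matrix_inv B - matrix_inv A) \<le> L * norm (B - A)) (at A)"
    using d by (auto simp: eventually_at dist_norm intro!: exI[of _ d] lip)
  moreover have "((\<lambda>B. L * norm (B - A)) \<longlongrightarrow> 0) (at A)"
    by (auto intro!: tendsto_eq_intros)
  ultimately have "((\<lambda>B. matrix_inv B - matrix_inv A) \<longlongrightarrow> 0) (at A)"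
    by (rule Lim_null_comparison)
  then show ?thesis unfolding isCont_def by (simp add: LIM_zero_iff)
qed

lemma open_invertible: "open {A::real^'n^'n. invertible A}"
proof (rule openI)
  fix A :: "real^'n^'n" assume "A \<in> {A. invertible A}"
  then obtain d L where "d > 0" "\<And>B. norm (B - A) < d \<Longrightarrow> invertible B"
    using matrix_inv_locally_lipschitz by (metis mem_Collect_eq)
  then show "\<exists>e>0. ball A e \<subseteq> {A. invertible A}"
    by (intro exI[of _ d]) (auto simp: dist_norm norm_minus_commute)
qed

lemma continuous_on_matrix_inv: "continuous_on {A::real^'n^'n. invertible A} matrix_inv"
  by (rule continuous_at_imp_continuous_on) (auto intro: isCont_matrix_inv)

lemma borel_measurable_matrix_inv: "(matrix_inv :: real^'n^'n \<Rightarrow> _) \<in> borel_measurable borel"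
proof -
  have "(matrix_inv :: real^'n^'n \<Rightarrow> _) =
     (\<lambda>A. if A \<in> {A. invertible A} then matrix_inv A else matrix_inv (0::real^'n^'n))"
    by (rule ext) (simp add: matrix_inv_not_invertible)
  also have "\<dots> \<in> borel_measurable borel"
    by (rule borel_measurable_continuous_on_if)
       (auto intro: borel_open open_invertible continuous_on_matrix_inv)
  finally show ?thesis .
qed

lemma invertible_limit:
  assumes lim: "A \<longlonglongrightarrow> (M::real^'n^'n)" and c: "c > 0"
    and inv: "\<And>k. invertible (A k)" and bound: "\<And>k. norm (matrix_inv (A k)) \<le> c"
  shows "invertible M" "norm (matrix_inv M) \<le> real CARD('n) * c"
proof -
  have below: "1 / c * norm x \<le> norm (M *v x)" for x
  proof -
    have "norm x \<le> c * norm (A k *v x)" for k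
    proof -
      have "norm x = norm (matrix_inv (A k) *v (A k *v x))"
        by (simp add: matrix_vector_mul_assoc matrix_inv_left[OF inv])
      also have "\<dots> \<le> c * norm (A k *v x)"
        using norm_matrix_vector_mult_le bound by (meson mult_right_mono norm_ge_zero order_trans)
      finally show ?thesis .
    qed
    moreover have "(\<lambda>k. c * norm (A k *v x)) \<longlonglongrightarrow> c * norm (M *v x)"
      by (intro tendsto_mult_left tendsto_norm bounded_linear.tendsto[OF bounded_linear_matrix_vector_mult_left lim])
    ultimately have "norm x \<le> c * norm (M *v x)" by (intro LIMSEQ_le_const) auto
    then show ?thesis using c by (simp add: field_simps)
  qed
  show "invertible M" "norm (matrix_inv M) \<le> real CARD('n) * c"
    using bounded_below_imp_invertible[OF _ below] c by auto
qed

section \<open>Positive (semi)definite matrices\<close>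

lemma symm_inner_matrix_vector_mult: "symm M \<Longrightarrow> x \<bullet> ((M::real^'n^'n) *v y) = (M *v x) \<bullet> y"
  by (simp add: symm_def flip: dot_lmul_matrix transpose_matrix_vector)

lemma posdef_imp_psd: "posdef P \<Longrightarrow> psd P"
  unfolding posdef_def psd_def by (metis inner_zero_left order_less_imp_le order_refl)

lemma psd_zero: "psd (0::real^'n^'n)"
  by (simp add: psd_def symm_def transpose_def vec_eq_iff)

lemma posdef_invertible: "posdef (P::real^'n^'n) \<Longrightarrow> invertible P"
proof -
  assume P: "posdef P"
  have "inj ((*v) P)"
  proof (rule injI)
    fix x y assume "P *v x = P *v y"
    then have "(x - y) \<bullet> (P *v (x - y)) = 0" by (simp add: matrix_vector_mult_diff_distrib)
    then show "x = y" using P unfolding posdef_def by (metis eq_iff_diff_eq_0 less_irrefl)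
  qed
  then show ?thesis using matrix_left_invertible_injective invertible_left_inverse by blast
qed

lemma psd_matrix_inv: "posdef (P::real^'n^'n) \<Longrightarrow> psd (matrix_inv P)"
  unfolding psd_def
proof (intro conjI allI)
  assume P: "posdef P"
  then have inv: "invertible P" and sym: "symm P"
    using posdef_invertible posdef_def by auto
  then show "symm (matrix_inv P)" by (simp add: symm_def matrix_inv_transpose[symmetric])
  fix x
  let ?u = "matrix_inv P *v x"
  have "x = P *v ?u" by (simp add: matrix_vector_mul_assoc matrix_inv_right[OF inv])
  then have "x \<bullet> ?u = ?u \<bullet> (P *v ?u)" by (metis inner_commute)
  also have "\<dots> \<ge> 0" using posdef_imp_psd[OF P] by (simp add: psd_def)
  finally show "0 \<le> x \<bullet> (matrix_inv P *v x)" .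
qed

lemma psd_matrix_inv_antimono:
  assumes P1: "posdef (P1::real^'n^'n)" and P2: "posdef P2" and le: "psd (P2 - P1)"
  shows "psd (matrix_inv P1 - matrix_inv P2)"
  unfolding psd_def
proof (intro conjI allI)
  show "symm (matrix_inv P1 - matrix_inv P2)"
    using psd_matrix_inv[OF P1] psd_matrix_inv[OF P2] by (simp add: psd_def symm_def transpose_distrib)
  fix x
  have i1: "invertible P1" and i2: "invertible P2" and s1: "symm P1"
    using P1 P2 posdef_invertible posdef_def by auto
  define u where "u = matrix_inv P1 *v x"
  define v where "v = matrix_inv P2 *v x"
  have Pu: "P1 *v u = x" by (simp add: u_def matrix_vector_mul_assoc matrix_inv_right[OF i1])
  have Pv: "P2 *v v = x" by (simp add: v_def matrix_vector_mul_assoc matrix_inv_right[OF i2])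
  have "0 \<le> (u - v) \<bullet> (P1 *v (u - v))" using posdef_imp_psd[OF P1] by (simp add: psd_def)
  also have "\<dots> = u \<bullet> x - v \<bullet> x - u \<bullet> (P1 *v v) + v \<bullet> (P1 *v v)"
    by (simp add: matrix_vector_mult_diff_distrib inner_diff Pu)
  also have "u \<bullet> (P1 *v v) = x \<bullet> v" by (simp add: symm_inner_matrix_vector_mult[OF s1] Pu)
  also have "v \<bullet> (P1 *v v) \<le> v \<bullet> (P2 *v v)"
    using le by (simp add: psd_def matrix_vector_mult_diff_rdistrib inner_diff)
  also have "v \<bullet> (P2 *v v) = v \<bullet> x" by (simp add: Pv)
  finally show "0 \<le> x \<bullet> ((matrix_inv P1 - matrix_inv P2) *v x)"
    by (simp add: matrix_vector_mult_diff_rdistrib inner_diff inner_commute flip: u_def v_def)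
qed

lemma quadratic_form_axis_add_diff:
  assumes "symm (A::real^'n^'n)"
  shows "(axis i 1 + axis j 1) \<bullet> (A *v (axis i 1 + axis j 1)) = A$i$i + A$j$j + 2 * A$i$j"
    "(axis i 1 - axis j 1) \<bullet> (A *v (axis i 1 - axis j 1)) = A$i$i + A$j$j - 2 * A$i$j"
proof -
  have quad: "axis k 1 \<bullet> (A *v axis l 1) = A$k$l" for k l
    by (simp add: inner_axis' matrix_vector_mul_component inner_axis)
  have "A$j$i = A$i$j" using assms unfolding symm_def by (metis transpose_def vec_lambda_beta)
  then show "(axis i 1 + axis j 1) \<bullet> (A *v (axis i 1 + axis j 1)) = A$i$i + A$j$j + 2 * A$i$j"
    "(axis i 1 - axis j 1) \<bullet> (A *v (axis i 1 - axis j 1)) = A$i$i + A$j$j - 2 * A$i$j"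
    by (simp_all add: matrix_vector_right_distrib matrix_vector_mult_diff_distrib inner_add inner_diff quad)
qed

lemma psd_diag_nonneg: "psd (A::real^'n^'n) \<Longrightarrow> 0 \<le> A$i$i"
  unfolding psd_def by (auto dest!: spec[of _ "axis i 1"] simp: inner_axis' matrix_vector_mul_component inner_axis)

lemma psd_entry_le:
  assumes "psd (A::real^'n^'n)"
  shows "\<bar>A$i$j\<bar> \<le> (A$i$i + A$j$j) / 2"
proof -
  have "0 \<le> (axis i 1 + axis j 1) \<bullet> (A *v (axis i 1 + axis j 1))"
    "0 \<le> (axis i 1 - axis j 1) \<bullet> (A *v (axis i 1 - axis j 1))"
    using assms by (auto simp: psd_def)
  then show ?thesis
    using quadratic_form_axis_add_diff[of A i j] assms by (simp add: psd_def abs_le_iff)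
qed

lemma norm_matrix_le_entrywise:
  assumes "\<And>i j. \<bar>(A::real^'n^'m)$i$j\<bar> \<le> c"
  shows "norm A \<le> real CARD('m) * real CARD('n) * c"
proof -
  have "norm A \<le> (\<Sum>i\<in>UNIV. norm (A $ i))"
    unfolding norm_vec_def[of A] by (rule L2_set_le_sum) simp
  also have "\<dots> \<le> (\<Sum>i\<in>(UNIV::'m set). \<Sum>j\<in>(UNIV::'n set). c)"
    by (intro sum_mono order_trans[OF norm_le_l1_cart] assms)
  finally show ?thesis by simp
qed

lemma psd_le_imp_norm_le:
  assumes "psd (A::real^'n^'n)" "psd (B - A)"
  shows "norm A \<le> real CARD('n) * real CARD('n) * norm B"
proof (rule norm_matrix_le_entrywise)
  have diag: "A$k$k \<le> norm B" for k
  proof -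
    have "B$k$k \<le> norm (B$k)" using component_le_norm_cart[of "B$k" k] by simp
    also have "\<dots> \<le> norm B" unfolding norm_vec_def[of B] by (rule member_le_L2_set) simp_all
    finally show ?thesis using psd_diag_nonneg[OF assms(2), of k] by simp
  qed
  show "\<bar>A$i$j\<bar> \<le> norm B" for i j using psd_entry_le[OF assms(1), of i j] diag[of i] diag[of j] by simp
qed

lemma psd_limit:
  assumes lim: "A \<longlonglongrightarrow> (M::real^'n^'n)" and psd: "\<And>k. psd (A k)"
  shows "psd M"
  unfolding psd_def
proof (intro conjI allI)
  have "(\<lambda>k. transpose (A k)) \<longlonglongrightarrow> transpose M" by (rule transpose_tendsto[OF lim])
  moreover have "transpose (A k) = A k" for k using psd by (simp add: psd_def symm_def)
  ultimately show "symm M" unfolding symm_def using lim LIMSEQ_unique by auto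
  fix x
  have "(\<lambda>k. x \<bullet> (A k *v x)) \<longlonglongrightarrow> x \<bullet> (M *v x)"
    by (intro tendsto_inner tendsto_const bounded_linear.tendsto[OF bounded_linear_matrix_vector_mult_left lim])
  then show "0 \<le> x \<bullet> (M *v x)" using psd by (intro LIMSEQ_le_const) (auto simp: psd_def)
qed

text \<open>Polarisation reduces the convergence of the entries to that of the monotone quadratic forms.\<close>

lemma psd_antitone_convergent:
  assumes psd: "\<And>k. psd (A k :: real^'n^'n)" and antitone: "\<And>k. psd (A k - A (Suc k))"
  shows "convergent A"
proof -
  have quad: "convergent (\<lambda>k. x \<bullet> (A k *v x))" for x
  proof (rule Bseq_monoseq_convergent)
    have "decseq (\<lambda>k. x \<bullet> (A k *v x))"
      using antitone by (intro decseq_SucI) (simp add: psd_def matrix_vector_mult_diff_rdistrib inner_diff)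
    moreover have "0 \<le> x \<bullet> (A k *v x)" for k using psd by (simp add: psd_def)
    ultimately show "Bseq (\<lambda>k. x \<bullet> (A k *v x))"
      by (intro BseqI'[of _ "x \<bullet> (A 0 *v x)"]) (auto simp: decseq_def)
    show "monoseq (\<lambda>k. x \<bullet> (A k *v x))" using \<open>decseq _\<close> by (simp add: monoseq_iff)
  qed
  have "convergent (\<lambda>k. A k $ i $ j)" for i j
  proof -
    let ?u = "axis i 1 + axis j 1" and ?v = "axis i 1 - axis j 1"
    obtain L1 L2 where "(\<lambda>k. ?u \<bullet> (A k *v ?u)) \<longlonglongrightarrow> L1" "(\<lambda>k. ?v \<bullet> (A k *v ?v)) \<longlonglongrightarrow> L2"
      using quad[of ?u] quad[of ?v] by (auto simp: convergent_def)
    then have "(\<lambda>k. (?u \<bullet> (A k *v ?u) - ?v \<bullet> (A k *v ?v)) / 4) \<longlonglongrightarrow> (L1 - L2) / 4"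
      by (intro tendsto_divide tendsto_diff tendsto_const) simp_all
    moreover have "(?u \<bullet> (A k *v ?u) - ?v \<bullet> (A k *v ?v)) / 4 = A k $ i $ j" for k
      using quadratic_form_axis_add_diff[of "A k" i j] psd by (simp add: psd_def)
    ultimately show ?thesis by (auto simp: convergent_def)
  qed
  then have "A \<longlonglongrightarrow> (\<chi> i j. lim (\<lambda>k. A k $ i $ j))"
    by (intro vec_tendstoI) (simp add: convergent_LIMSEQ_iff[symmetric])
  then show ?thesis by (auto simp: convergent_def)
qed

section \<open>Measurable and essentially bounded functions on a set\<close>

definition borel_on :: "real set \<Rightarrow> (real \<Rightarrow> 'a::topological_space) \<Rightarrow> bool" where
  "borel_on S f \<longleftrightarrow> (\<exists>g \<in> borel_measurable borel. \<forall>s\<in>S. f s = g s)"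

definition ess_bounded :: "real set \<Rightarrow> (real \<Rightarrow> 'a::real_normed_vector) \<Rightarrow> bool" where
  "ess_bounded S f \<longleftrightarrow> (\<exists>B. AE s in lborel. s \<in> S \<longrightarrow> norm (f s) \<le> B)"

lemma borel_on_compose:
  assumes "borel_on S f" "h \<in> borel_measurable borel"
  shows "borel_on S (\<lambda>s. h (f s))"
proof -
  obtain g where "g \<in> borel_measurable borel" "\<forall>s\<in>S. f s = g s"
    using assms(1) unfolding borel_on_def by blast
  then show ?thesis
    unfolding borel_on_def by (intro bexI[of _ "\<lambda>s. h (g s)"] measurable_compose[OF _ assms(2)]) auto
qed

lemma borel_on_compose2:
  fixes f :: "real \<Rightarrow> 'a::second_countable_topology" and g :: "real \<Rightarrow> 'b::second_countable_topology"
  assumes "borel_on S f" "borel_on S g" "continuous_on UNIV (\<lambda>x. H (fst x) (snd x))"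
  shows "borel_on S (\<lambda>s. H (f s) (g s))"
proof -
  obtain f' where f': "f' \<in> borel_measurable borel" "\<forall>s\<in>S. f s = f' s"
    using assms(1) unfolding borel_on_def by blast
  obtain g' where g': "g' \<in> borel_measurable borel" "\<forall>s\<in>S. g s = g' s"
    using assms(2) unfolding borel_on_def by blast
  have "(\<lambda>s. H (f' s) (g' s)) \<in> borel_measurable borel"
    by (rule borel_measurable_continuous_Pair[OF f'(1) g'(1) assms(3)])
  then show ?thesis unfolding borel_on_def using f'(2) g'(2) by (intro bexI[of _ "\<lambda>s. H (f' s) (g' s)"]) auto
qed

lemma borel_on_const: "borel_on S (\<lambda>s. c)"
  unfolding borel_on_def by (intro bexI[of _ "\<lambda>s. c"]) auto

lemma borel_on_add:
  "borel_on S f \<Longrightarrow> borel_on S g \<Longrightarrow>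
    borel_on S (\<lambda>s. (f s :: 'a::{real_normed_vector,second_countable_topology}) + g s)"
  by (rule borel_on_compose2[where H="(+)"]) (auto intro!: continuous_intros)

lemma borel_on_diff:
  "borel_on S f \<Longrightarrow> borel_on S g \<Longrightarrow>
    borel_on S (\<lambda>s. (f s :: 'a::{real_normed_vector,second_countable_topology}) - g s)"
  by (rule borel_on_compose2[where H="(-)"]) (auto intro!: continuous_intros)

lemma borel_on_scaleR:
  "borel_on S f \<Longrightarrow> borel_on S g \<Longrightarrow>
    borel_on S (\<lambda>s. (f s :: real) *\<^sub>R (g s :: 'a::{real_normed_vector,second_countable_topology}))"
  by (rule borel_on_compose2[where H="(*\<^sub>R)"]) (auto intro!: continuous_intros)

lemma borel_on_sum:
  "(\<And>k. k \<in> K \<Longrightarrow> borel_on S (f k)) \<Longrightarrow>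
    borel_on S (\<lambda>s. \<Sum>k\<in>K. f k s :: 'a::{real_normed_vector,second_countable_topology})"
  by (induction K rule: infinite_finite_induct) (auto intro: borel_on_const borel_on_add)

lemma borel_on_matrix_mult:
  "borel_on S f \<Longrightarrow> borel_on S g \<Longrightarrow> borel_on S (\<lambda>s. (f s :: real^'n^'m) ** (g s :: real^'p^'n))"
  by (rule borel_on_compose2[where H="(**)"])
     (auto intro!: bounded_bilinear.continuous_on[OF bounded_bilinear_matrix_mult] continuous_intros)

lemma borel_on_transpose: "borel_on S f \<Longrightarrow> borel_on S (\<lambda>s. transpose (f s :: real^'n^'m))"
  by (erule borel_on_compose)
     (intro borel_measurable_continuous_onI linear_continuous_on bounded_linear_transpose)

lemma borel_on_matrix_inv: "borel_on S f \<Longrightarrow> borel_on S (\<lambda>s. matrix_inv (f s :: real^'n^'n))"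
  by (rule borel_on_compose[OF _ borel_measurable_matrix_inv])

lemmas borel_on_intros = borel_on_const borel_on_add borel_on_diff borel_on_scaleR borel_on_sum
  borel_on_matrix_mult borel_on_transpose borel_on_matrix_inv

lemma borel_on_continuous_on:
  "continuous_on {a..b} f \<Longrightarrow> borel_on {a..b} (f :: real \<Rightarrow> 'a::real_normed_vector)"
  unfolding borel_on_def
  by (intro bexI[of _ "\<lambda>s. indicator {a..b} s *\<^sub>R f s"])
     (auto intro: borel_measurable_continuous_on_indicator)

lemma borel_on_iff_set_borel_measurable:
  fixes f :: "real \<Rightarrow> 'a::{real_normed_vector,second_countable_topology}"
  assumes "S \<in> sets borel"
  shows "borel_on S f \<longleftrightarrow> set_borel_measurable lborel S f"
proof
  assume "borel_on S f"
  then obtain g where g: "g \<in> borel_measurable borel" "\<forall>s\<in>S. f s = g s"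
    unfolding borel_on_def by blast
  then have "(\<lambda>s. indicator S s *\<^sub>R f s) = (\<lambda>s. indicator S s *\<^sub>R g s)"
    by (auto simp: fun_eq_iff indicator_def)
  moreover have "(\<lambda>s. indicator S s *\<^sub>R g s) \<in> borel_measurable borel"
    using assms g(1) by (intro borel_measurable_scaleR borel_measurable_indicator) auto
  ultimately show "set_borel_measurable lborel S f" unfolding set_borel_measurable_def by simp
next
  assume "set_borel_measurable lborel S f"
  then show "borel_on S f"
    unfolding borel_on_def set_borel_measurable_def
    by (intro bexI[of _ "\<lambda>s. indicator S s *\<^sub>R f s"]) auto
qed

lemma borel_on_subset: "borel_on S f \<Longrightarrow> S' \<subseteq> S \<Longrightarrow> borel_on S' f"
  unfolding borel_on_def by blast

lemma set_integrable_imp_borel_on: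
  fixes f :: "real \<Rightarrow> 'a::{banach,second_countable_topology}"
  shows "set_integrable lborel S f \<Longrightarrow> borel_on S f"
  unfolding set_integrable_def borel_on_def
  by (intro bexI[of _ "\<lambda>s. indicator S s *\<^sub>R f s"]) auto

lemma borel_on_LIMSEQ:
  fixes f :: "nat \<Rightarrow> real \<Rightarrow> 'a::{real_normed_vector,second_countable_topology}"
  assumes "S \<in> sets borel" and meas: "\<And>n. borel_on S (f n)"
    and lim: "\<And>s. s \<in> S \<Longrightarrow> (\<lambda>n. f n s) \<longlonglongrightarrow> g s"
  shows "borel_on S g"
proof -
  have "(\<lambda>s. indicator S s *\<^sub>R g s) \<in> borel_measurable lborel"
  proof (rule borel_measurable_LIMSEQ_metric)
    show "(\<lambda>s. indicator S s *\<^sub>R f n s) \<in> borel_measurable lborel" for n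
      using meas[of n] assms(1) by (simp add: borel_on_iff_set_borel_measurable set_borel_measurable_def)
    show "(\<lambda>n. indicator S s *\<^sub>R f n s) \<longlonglongrightarrow> indicator S s *\<^sub>R g s" for s
      using lim[of s] by (cases "s \<in> S") auto
  qed
  then show ?thesis using assms(1) by (simp add: borel_on_iff_set_borel_measurable set_borel_measurable_def)
qed

lemma ess_boundedE:
  assumes "ess_bounded S f"
  obtains B where "B \<ge> 0" "AE s in lborel. s \<in> S \<longrightarrow> norm (f s) \<le> B"
proof -
  obtain B where "AE s in lborel. s \<in> S \<longrightarrow> norm (f s) \<le> B" using assms ess_bounded_def by blast
  then have "AE s in lborel. s \<in> S \<longrightarrow> norm (f s) \<le> max B 0" by eventually_elim auto
  then show ?thesis using that[of "max B 0"] by auto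
qed

lemma ess_bounded_const: "ess_bounded S (\<lambda>s. c)"
  unfolding ess_bounded_def by (intro exI[of _ "norm c"]) simp

lemma ess_bounded_norm: "ess_bounded S f \<Longrightarrow> ess_bounded S (\<lambda>s. norm (f s))"
  unfolding ess_bounded_def by simp

lemma ess_bounded_transpose: "ess_bounded S f \<Longrightarrow> ess_bounded S (\<lambda>s. transpose (f s :: real^'n^'m))"
  unfolding ess_bounded_def by (simp add: norm_transpose)

lemma ess_bounded_compose2:
  assumes "ess_bounded S f" "ess_bounded S g"
    and "\<And>x y a b. 0 \<le> a \<Longrightarrow> 0 \<le> b \<Longrightarrow> norm x \<le> a \<Longrightarrow> norm y \<le> b \<Longrightarrow> norm (H x y) \<le> h a b"
  shows "ess_bounded S (\<lambda>s. H (f s) (g s))"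
proof -
  obtain a where a: "a \<ge> 0" "AE s in lborel. s \<in> S \<longrightarrow> norm (f s) \<le> a"
    using assms(1) by (rule ess_boundedE)
  obtain b where b: "b \<ge> 0" "AE s in lborel. s \<in> S \<longrightarrow> norm (g s) \<le> b"
    using assms(2) by (rule ess_boundedE)
  from a(2) b(2) have "AE s in lborel. s \<in> S \<longrightarrow> norm (H (f s) (g s)) \<le> h a b"
    by eventually_elim (simp add: assms(3)[OF a(1) b(1)])
  then show ?thesis unfolding ess_bounded_def by blast
qed

lemma ess_bounded_add:
  assumes "ess_bounded S f" "ess_bounded S g"
  shows "ess_bounded S (\<lambda>s. f s + g s)"
proof (rule ess_bounded_compose2[OF assms, where h="(+)"])
  show "norm (x + y) \<le> a + b" if "norm x \<le> a" "norm y \<le> b" for x y :: 'a and a b :: real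
    using norm_triangle_ineq[of x y] that by linarith
qed

lemma ess_bounded_diff:
  assumes "ess_bounded S f" "ess_bounded S g"
  shows "ess_bounded S (\<lambda>s. f s - g s)"
proof (rule ess_bounded_compose2[OF assms, where h="(+)"])
  show "norm (x - y) \<le> a + b" if "norm x \<le> a" "norm y \<le> b" for x y :: 'a and a b :: real
    using norm_triangle_ineq4[of x y] that by linarith
qed

lemma ess_bounded_matrix_mult:
  assumes "ess_bounded S f" "ess_bounded S g"
  shows "ess_bounded S (\<lambda>s. (f s :: real^'n^'m) ** (g s :: real^'p^'n))"
proof (rule ess_bounded_compose2[OF assms, where h="(*)"])
  fix x :: "real^'n^'m" and y :: "real^'p^'n" and a b :: real
  assume "0 \<le> a" "0 \<le> b" "norm x \<le> a" "norm y \<le> b"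
  then show "norm (x ** y) \<le> a * b"
    by (intro order_trans[OF norm_matrix_mult_le mult_mono]) simp_all
qed

lemma ess_bounded_sum:
  "(\<And>k. k \<in> K \<Longrightarrow> ess_bounded S (f k)) \<Longrightarrow> ess_bounded S (\<lambda>s. \<Sum>k\<in>K. f k s)"
  by (induction K rule: infinite_finite_induct) (auto intro: ess_bounded_const ess_bounded_add)

lemma ess_bounded_continuous_on:
  assumes "continuous_on S f" "compact S"
  shows "ess_bounded S f"
proof -
  obtain B where "\<forall>x\<in>f ` S. norm x \<le> B"
    using compact_continuous_image[OF assms] compact_imp_bounded bounded_iff by metis
  then show ?thesis unfolding ess_bounded_def by (intro exI[of _ B]) auto
qed

lemma Linf_iff: "Linf T f \<longleftrightarrow> borel_on {0..T} f \<and> ess_bounded {0..T} f"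
  unfolding Linf_def ess_bounded_def by (simp add: borel_on_iff_set_borel_measurable)

lemma coercive_imp_bounded_below:
  assumes "\<delta> \<ge> 0" "\<And>x. \<delta> * (x \<bullet> x) \<le> x \<bullet> ((M::real^'n^'n) *v x)"
  shows "\<delta> * norm x \<le> norm (M *v x)"
proof (cases "x = 0")
  case False
  have "\<delta> * (norm x * norm x) \<le> norm x * norm (M *v x)"
    using assms(2)[of x] Cauchy_Schwarz_ineq2[of x "M *v x"]
    by (simp add: power2_norm_eq_inner[symmetric] power2_eq_square)
  then show ?thesis using False by (simp add: mult.assoc[symmetric] mult.commute[of \<delta>])
qed (simp add: assms(1))

lemma unif_pos_matrix_inv:
  assumes "unif_pos T (F :: real \<Rightarrow> real^'n^'n)"
  shows "AE s in lborel. s \<in> {0..T} \<longrightarrow> invertible (F s)"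
    "ess_bounded {0..T} (\<lambda>s. matrix_inv (F s))"
proof -
  obtain \<delta> where "\<delta> > 0"
    and coercive: "AE s in lborel. s \<in> {0..T} \<longrightarrow> (\<forall>x. \<delta> * (x \<bullet> x) \<le> x \<bullet> (F s *v x))"
    using assms unfolding unif_pos_def by blast
  from coercive have ae: "AE s in lborel. s \<in> {0..T} \<longrightarrow>
      invertible (F s) \<and> norm (matrix_inv (F s)) \<le> real CARD('n) / \<delta>"
  proof eventually_elim
    case (elim s)
    show ?case
    proof
      assume "s \<in> {0..T}"
      then have below: "\<delta> * norm x \<le> norm (F s *v x)" for x
        using elim \<open>\<delta> > 0\<close> by (intro coercive_imp_bounded_below) auto
      show "invertible (F s) \<and> norm (matrix_inv (F s)) \<le> real CARD('n) / \<delta>"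
        using bounded_below_imp_invertible[OF \<open>\<delta> > 0\<close> below] by simp
    qed
  qed
  then show "AE s in lborel. s \<in> {0..T} \<longrightarrow> invertible (F s)" by eventually_elim auto
  from ae have "AE s in lborel. s \<in> {0..T} \<longrightarrow> norm (matrix_inv (F s)) \<le> real CARD('n) / \<delta>"
    by eventually_elim auto
  then show "ess_bounded {0..T} (\<lambda>s. matrix_inv (F s))" unfolding ess_bounded_def by blast
qed

section \<open>Integral equations on [0,T]\<close>

lemma ode_solution_integral:
  fixes F :: "real \<Rightarrow> 'a::euclidean_space"
  assumes "ode_solution T X F" "t \<in> {0..T}"
  shows "X t = X T - integral {t..T} F" "F integrable_on {t..T}"
proof -
  have "set_integrable lborel {0..T} F" using assms(1) unfolding ode_solution_def by blast
  then have FI: "set_integrable lborel {t..T} F"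
    by (rule set_integrable_subset) (use assms(2) in auto)
  have "X t = X T - (LINT r:{t..T}|lborel. F r)" using assms unfolding ode_solution_def by blast
  then show "X t = X T - integral {t..T} F" "F integrable_on {t..T}"
    using set_borel_integral_eq_integral[OF FI] by simp_all
qed

lemma ode_solution_increment:
  fixes F :: "real \<Rightarrow> 'a::euclidean_space"
  assumes ode: "ode_solution T X F" and "0 \<le> a" "a \<le> b" "b \<le> T"
  shows "X b - X a = integral {a..b} F" "F integrable_on {a..b}"
proof -
  have F: "F integrable_on {a..T}" using ode_solution_integral(2)[OF ode] assms(2-4) by simp
  then show "F integrable_on {a..b}" by (rule integrable_on_subinterval) (use assms(2-4) in auto)
  have combine: "integral {a..b} F + integral {b..T} F = integral {a..T} F"
    using assms(2-4) by (intro Henstock_Kurzweil_Integration.integral_combine F) auto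
  show "X b - X a = integral {a..b} F"
    using ode_solution_integral(1)[OF ode, of a] ode_solution_integral(1)[OF ode, of b] assms(2-4)
    by (simp flip: combine)
qed

lemma integral_equation_continuous:
  fixes F :: "real \<Rightarrow> 'a::euclidean_space"
  assumes FI: "set_integrable lborel {0..T} F"
    and eq: "\<And>t. t \<in> {0..T} \<Longrightarrow> X t = c - (LINT r:{t..T}|lborel. F r)"
  shows "continuous_on {0..T} X"
proof -
  show ?thesis
  proof (rule continuous_on_eq)
    have "F integrable_on {0..T}" using set_borel_integral_eq_integral(1)[OF FI] .
    then show "continuous_on {0..T} (\<lambda>t. c - integral {t..T} F)"
      by (intro continuous_intros indefinite_integral_continuous_1')
    fix t assume t: "t \<in> {0..T}"
    have "set_integrable lborel {t..T} F"
      by (rule set_integrable_subset[OF FI]) (use t in auto)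
    then show "c - integral {t..T} F = X t"
      using eq[OF t] by (simp add: set_borel_integral_eq_integral(2))
  qed
qed

lemma set_integrable_of_ess_bounded:
  fixes f :: "real \<Rightarrow> 'a::{banach,second_countable_topology}"
  assumes "borel_on {a..b} f" "ess_bounded {a..b} f"
  shows "set_integrable lborel {a..b} f"
proof -
  obtain B where B: "AE s in lborel. s \<in> {a..b} \<longrightarrow> norm (f s) \<le> B"
    using assms(2) by (rule ess_boundedE)
  show ?thesis unfolding set_integrable_def
  proof (rule Bochner_Integration.integrable_bound)
    show "integrable lborel (\<lambda>s. indicator {a..b} s * B :: real)"
      by (intro integrable_mult_left integrable_real_indicator) (auto simp: emeasure_lborel_Icc_eq)
    show "(\<lambda>s. indicator {a..b} s *\<^sub>R f s) \<in> borel_measurable lborel"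
      using assms(1) by (simp add: borel_on_iff_set_borel_measurable set_borel_measurable_def)
    show "AE s in lborel. norm (indicator {a..b} s *\<^sub>R f s) \<le> norm (indicator {a..b} s * B :: real)"
      using B by eventually_elim (auto simp: indicator_def)
  qed
qed

lemma ode_solution_cong_AE:
  fixes F G :: "real \<Rightarrow> 'a::euclidean_space"
  assumes ode: "ode_solution T X F" and G: "borel_on {0..T} G"
    and eq: "AE s in lborel. s \<in> {0..T} \<longrightarrow> F s = G s"
  shows "ode_solution T X G"
proof -
  have FI: "set_integrable lborel {0..T} F" using ode unfolding ode_solution_def by blast
  have on: "set_integrable lborel S G \<and> (LINT r:S|lborel. F r) = (LINT r:S|lborel. G r)"
    if S: "S \<subseteq> {0..T}" "S \<in> sets borel" for S
  proof -
    have meas: "(\<lambda>s. indicator S s *\<^sub>R F s) \<in> borel_measurable lborel"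
      "(\<lambda>s. indicator S s *\<^sub>R G s) \<in> borel_measurable lborel"
      using borel_on_subset[OF set_integrable_imp_borel_on[OF FI] S(1)] borel_on_subset[OF G S(1)] S(2)
      by (simp_all add: borel_on_iff_set_borel_measurable set_borel_measurable_def)
    have "AE s in lborel. indicator S s *\<^sub>R F s = indicator S s *\<^sub>R G s"
      using eq by eventually_elim (use S(1) in \<open>auto simp: indicator_def\<close>)
    moreover have "set_integrable lborel S F"
      by (rule set_integrable_subset[OF FI]) (use S in auto)
    ultimately show ?thesis
      using integrable_cong_AE[OF meas] integral_cong_AE[OF meas]
      unfolding set_integrable_def set_lebesgue_integral_def by auto
  qed
  have "X t = X T - (LINT r:{t..T}|lborel. G r)" if "t \<in> {0..T}" for t
  proof -
    have "X t = X T - (LINT r:{t..T}|lborel. F r)" using ode that unfolding ode_solution_def by blast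
    then show ?thesis using on[of "{t..T}"] that by simp
  qed
  moreover have "set_integrable lborel {0..T} G" using on[of "{0..T}"] by simp
  ultimately show ?thesis using ode unfolding ode_solution_def by blast
qed

lemma ode_solution_limit:
  fixes X F :: "nat \<Rightarrow> real \<Rightarrow> 'a::euclidean_space"
  assumes "0 \<le> T"
    and ode: "\<And>n. ode_solution T (X n) (F n)"
    and X_lim: "\<And>t. t \<in> {0..T} \<Longrightarrow> (\<lambda>n. X n t) \<longlonglongrightarrow> Y t"
    and G: "borel_on {0..T} G"
    and F_lim: "AE r in lborel. r \<in> {0..T} \<longrightarrow> (\<lambda>n. F n r) \<longlonglongrightarrow> G r"
    and F_bound: "AE r in lborel. r \<in> {0..T} \<longrightarrow> (\<forall>n. norm (F n r) \<le> B)"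
  shows "ode_solution T Y G"
proof -
  have "AE r in lborel. r \<in> {0..T} \<longrightarrow> norm (G r) \<le> B"
    using F_lim F_bound by eventually_elim (auto intro: LIMSEQ_le_const2 tendsto_norm)
  then have GI: "set_integrable lborel {0..T} G"
    using G by (intro set_integrable_of_ess_bounded) (auto simp: ess_bounded_def)
  have eq: "Y t = Y T - (LINT r:{t..T}|lborel. G r)" if t: "t \<in> {0..T}" for t
  proof -
    have sub: "{t..T} \<subseteq> {0..T}" using t by auto
    have meas: "(\<lambda>r. indicator {t..T} r *\<^sub>R H r) \<in> borel_measurable lborel"
      if "borel_on {0..T} H" for H :: "real \<Rightarrow> 'a"
      using borel_on_subset[OF that sub] by (simp add: borel_on_iff_set_borel_measurable set_borel_measurable_def)
    have lim_int: "(\<lambda>n. LINT r:{t..T}|lborel. F n r) \<longlonglongrightarrow> (LINT r:{t..T}|lborel. G r)"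
      unfolding set_lebesgue_integral_def
    proof (rule integral_dominated_convergence[where w="\<lambda>r. indicator {t..T} r * B"])
      show "(\<lambda>r. indicator {t..T} r *\<^sub>R F n r) \<in> borel_measurable lborel" for n
        using ode[of n] unfolding ode_solution_def by (blast intro: meas set_integrable_imp_borel_on)
      show "(\<lambda>r. indicator {t..T} r *\<^sub>R G r) \<in> borel_measurable lborel" by (rule meas[OF G])
      show "integrable lborel (\<lambda>r. indicator {t..T} r * B)"
        by (intro integrable_mult_left integrable_real_indicator) (auto simp: emeasure_lborel_Icc_eq)
      show "AE r in lborel. (\<lambda>n. indicator {t..T} r *\<^sub>R F n r) \<longlonglongrightarrow> indicator {t..T} r *\<^sub>R G r"
        using F_lim
      proof eventually_elim
        case (elim r)
        show ?case using elim subsetD[OF sub, of r] by (cases "r \<in> {t..T}") simp_all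
      qed
      show "AE r in lborel. norm (indicator {t..T} r *\<^sub>R F n r) \<le> indicator {t..T} r * B" for n
        using F_bound
      proof eventually_elim
        case (elim r)
        show ?case using elim subsetD[OF sub, of r] by (cases "r \<in> {t..T}") simp_all
      qed
    qed
    have int_eq: "(LINT r:{t..T}|lborel. F n r) = X n T - X n t" for n
    proof -
      have "X n t = X n T - (LINT r:{t..T}|lborel. F n r)"
        using ode[of n] t unfolding ode_solution_def by blast
      then show ?thesis by simp
    qed
    have "(\<lambda>n. X n T - X n t) \<longlonglongrightarrow> Y T - Y t"
      by (intro tendsto_diff X_lim) (use t in simp_all)
    with lim_int have "(LINT r:{t..T}|lborel. G r) = Y T - Y t"
      unfolding int_eq by (rule LIMSEQ_unique)
    then show ?thesis by simp
  qed
  show ?thesis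
    unfolding ode_solution_def using GI eq integral_equation_continuous[OF GI eq] by blast
qed

lemma increment_bound_of_local:
  fixes \<psi> :: "real \<Rightarrow> 'a::real_normed_vector" and N :: "real \<Rightarrow> real"
  assumes d: "d > 0" and "t \<le> T"
    and local: "\<And>a b. t \<le> a \<Longrightarrow> a \<le> b \<Longrightarrow> b \<le> T \<Longrightarrow> b - a < d \<Longrightarrow>
      norm (\<psi> a - \<psi> b) \<le> e * (N a - N b)"
  shows "norm (\<psi> t - \<psi> T) \<le> e * (N t - N T)"
proof -
  have "\<forall>u. t \<le> u \<longrightarrow> u \<le> T \<longrightarrow> T - u \<le> real m * (d/2) \<longrightarrow> norm (\<psi> u - \<psi> T) \<le> e * (N u - N T)"
    for m
  proof (induction m)
    case 0
    then show ?case by auto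
  next
    case (Suc m)
    show ?case
    proof (intro allI impI)
      fix u assume u: "t \<le> u" "u \<le> T" "T - u \<le> real (Suc m) * (d/2)"
      show "norm (\<psi> u - \<psi> T) \<le> e * (N u - N T)"
      proof (cases "T - u < d")
        case True
        then show ?thesis using local[of u T] u by auto
      next
        case False
        let ?w = "u + d/2"
        have w: "t \<le> ?w" "?w \<le> T" "T - ?w \<le> real m * (d/2)"
          using u False d by (auto simp: field_simps)
        have "norm (\<psi> u - \<psi> T) \<le> norm (\<psi> u - \<psi> ?w) + norm (\<psi> ?w - \<psi> T)"
          by (rule norm_diff_triangle_le[OF order_refl order_refl])
        also have "\<dots> \<le> e * (N u - N ?w) + e * (N ?w - N T)"
          using local[of u ?w] u d Suc.IH w by (intro add_mono) auto
        finally show ?thesis by (simp add: algebra_simps)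
      qed
    qed
  qed
  moreover obtain m :: nat where "(T - t) / (d/2) < real m" using reals_Archimedean2 by blast
  then have "T - t \<le> real m * (d/2)" using d by (simp add: field_simps)
  ultimately show ?thesis using \<open>t \<le> T\<close> by auto
qed

lemma bounded_linear_matrix_sandwich:
  "bounded_linear (\<lambda>M::real^'n^'m. (A::real^'m^'p) ** M ** (B::real^'q^'n))"
  by (rule bounded_linear_compose[OF bounded_bilinear.bounded_linear_left[OF bounded_bilinear_matrix_mult]
        bounded_bilinear.bounded_linear_right[OF bounded_bilinear_matrix_mult]])

lemma eq_of_local_increment_bound:
  fixes \<psi> :: "real \<Rightarrow> 'a::real_normed_vector" and N :: "real \<Rightarrow> real"
  assumes "t \<le> T"
    and local: "\<And>e. e > 0 \<Longrightarrow> \<exists>d>0. \<forall>a b. t \<le> a \<longrightarrow> a \<le> b \<longrightarrow> b \<le> T \<longrightarrow> b - a < d \<longrightarrow>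
      norm (\<psi> a - \<psi> b) \<le> e * (N a - N b)"
  shows "\<psi> t = \<psi> T"
proof -
  have "norm (\<psi> t - \<psi> T) \<le> 0 + e" if "e > 0" for e
  proof -
    define e' where "e' = e / (\<bar>N t - N T\<bar> + 1)"
    have "e' > 0" unfolding e'_def using that by (simp add: add_nonneg_pos)
    with local obtain d where "d > 0" and d: "\<forall>a b. t \<le> a \<longrightarrow> a \<le> b \<longrightarrow> b \<le> T \<longrightarrow> b - a < d \<longrightarrow>
        norm (\<psi> a - \<psi> b) \<le> e' * (N a - N b)"
      by blast
    have "norm (\<psi> t - \<psi> T) \<le> e' * (N t - N T)"
      by (rule increment_bound_of_local[OF \<open>d > 0\<close> \<open>t \<le> T\<close>]) (simp add: d)
    also have "\<dots> \<le> e' * \<bar>N t - N T\<bar>" using \<open>e' > 0\<close> by (intro mult_left_mono) auto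
    also have "\<dots> \<le> e" unfolding e'_def using that by (simp add: field_simps)
    finally show ?thesis by simp
  qed
  then have "norm (\<psi> t - \<psi> T) \<le> 0" by (rule field_le_epsilon)
  then show ?thesis by simp
qed

lemma set_integrable_matrix_sandwich:
  fixes F Y :: "real \<Rightarrow> real^'n^'n"
  assumes FI: "set_integrable lborel {a..b} F" and cY: "continuous_on {a..b} Y"
  shows "set_integrable lborel {a..b} (\<lambda>s. Y s ** F s ** Y s)"
proof -
  obtain K where K: "K \<ge> 0" "\<And>s. s \<in> {a..b} \<Longrightarrow> norm (Y s) \<le> K"
    using compact_imp_bounded[OF compact_continuous_image[OF cY compact_Icc]]
    unfolding bounded_pos by (metis image_eqI less_imp_le)
  show ?thesis unfolding set_integrable_def
  proof (rule Bochner_Integration.integrable_bound)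
    show "integrable lborel (\<lambda>s. (K * K) * (indicator {a..b} s *\<^sub>R norm (F s)))"
      using set_integrable_norm[OF FI] unfolding set_integrable_def by (rule integrable_mult_right)
    have "borel_on {a..b} (\<lambda>s. Y s ** F s ** Y s)"
      using set_integrable_imp_borel_on[OF FI] borel_on_continuous_on[OF cY] by (intro borel_on_matrix_mult)
    then show "(\<lambda>s. indicator {a..b} s *\<^sub>R (Y s ** F s ** Y s)) \<in> borel_measurable lborel"
      by (simp add: borel_on_iff_set_borel_measurable set_borel_measurable_def)
    have "norm (Y s ** F s ** Y s) \<le> K * K * norm (F s)" if "s \<in> {a..b}" for s
    proof -
      have "norm (Y s ** F s ** Y s) \<le> norm (Y s) * norm (F s) * norm (Y s)" by (rule norm_matrix_mult3_le)
      also have "\<dots> \<le> K * norm (F s) * K" using K that by (intro mult_mono) (auto intro: mult_right_mono)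
      finally show ?thesis by (simp add: mult_ac)
    qed
    then show "AE s in lborel. norm (indicator {a..b} s *\<^sub>R (Y s ** F s ** Y s))
        \<le> norm ((K * K) * (indicator {a..b} s *\<^sub>R norm (F s)))"
      using K(1) by (intro AE_I2) (simp add: indicator_def)
  qed
qed

text \<open>The increment of the inverse is \<open>Y a (X b - X a) Y b\<close> exactly; replacing the outer factors of
  the integrand \<open>Y a F Y b\<close> by \<open>Y r\<close> costs little when \<open>Y\<close> varies little on \<open>[a,b]\<close>.\<close>

lemma matrix_inv_increment_estimate:
  fixes X F :: "real \<Rightarrow> real^'n^'n"
  defines "Y s \<equiv> matrix_inv (X s)"
  assumes ode: "ode_solution T X F" and ab: "0 \<le> a" "a \<le> b" "b \<le> T"
    and inv: "invertible (X a)" "invertible (X b)"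
    and K: "\<And>r. r \<in> {a..b} \<Longrightarrow> norm (Y r) \<le> K"
    and near: "\<And>r. r \<in> {a..b} \<Longrightarrow> norm (Y a - Y r) \<le> \<eta> \<and> norm (Y b - Y r) \<le> \<eta>"
    and G_int: "(\<lambda>r. Y r ** F r ** Y r) integrable_on {a..b}"
  shows "norm (Y a - Y b - integral {a..b} (\<lambda>r. Y r ** F r ** Y r))
    \<le> 2 * K * \<eta> * integral {a..b} (\<lambda>r. norm (F r))"
proof -
  note incr = ode_solution_increment[OF ode ab]
  have "set_integrable lborel {0..T} F" using ode unfolding ode_solution_def by blast
  then have "set_integrable lborel {a..b} F" by (rule set_integrable_subset) (use ab in auto)
  then have nF_int: "(\<lambda>r. norm (F r)) integrable_on {a..b}"
    using set_borel_integral_eq_integral(1)[OF set_integrable_norm] by blast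
  have "Y a - Y b = Y a ** (X b - X a) ** Y b"
    using inv by (simp add: Y_def matrix_mult_distrib matrix_inv_left matrix_inv_right flip: matrix_mul_assoc)
  also have "\<dots> = integral {a..b} (\<lambda>r. Y a ** F r ** Y b)"
    unfolding incr(1) using integral_linear[OF incr(2) bounded_linear_matrix_sandwich[of "Y a" "Y b"]]
    by (simp add: o_def)
  finally have Y_incr: "Y a - Y b = integral {a..b} (\<lambda>r. Y a ** F r ** Y b)" .
  have sandwich_int: "(\<lambda>r. Y a ** F r ** Y b) integrable_on {a..b}"
    using integrable_linear[OF incr(2) bounded_linear_matrix_sandwich[of "Y a" "Y b"]] by (simp add: o_def)
  have "Y a - Y b - integral {a..b} (\<lambda>r. Y r ** F r ** Y r)
      = integral {a..b} (\<lambda>r. Y a ** F r ** Y b - Y r ** F r ** Y r)"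
    unfolding Y_incr using sandwich_int G_int by (simp add: integral_diff)
  also have "norm \<dots> \<le> integral {a..b} (\<lambda>r. 2 * K * \<eta> * norm (F r))"
  proof (rule integral_norm_bound_integral)
    show "(\<lambda>r. Y a ** F r ** Y b - Y r ** F r ** Y r) integrable_on {a..b}"
      using sandwich_int G_int by (rule integrable_diff)
    show "(\<lambda>r. 2 * K * \<eta> * norm (F r)) integrable_on {a..b}"
      using integrable_on_cmult_left[OF nF_int] by simp
    fix r assume r: "r \<in> {a..b}"
    have nonneg: "0 \<le> \<eta>" "0 \<le> K"
      using near[OF r] K[OF r] by (meson norm_ge_zero order_trans)+
    have "Y a ** F r ** Y b - Y r ** F r ** Y r = (Y a - Y r) ** F r ** Y b + Y r ** F r ** (Y b - Y r)"
      by (simp add: matrix_mult_distrib)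
    also have "norm \<dots> \<le> norm (Y a - Y r) * norm (F r) * norm (Y b)
                        + norm (Y r) * norm (F r) * norm (Y b - Y r)"
      by (intro norm_triangle_le add_mono norm_matrix_mult3_le)
    also have "\<dots> \<le> \<eta> * norm (F r) * K + K * norm (F r) * \<eta>"
      using near[OF r] K[OF r] K[of b] ab nonneg by (intro add_mono mult_mono) auto
    finally show "norm (Y a ** F r ** Y b - Y r ** F r ** Y r) \<le> 2 * K * \<eta> * norm (F r)"
      by (simp add: algebra_simps)
  qed
  also have "\<dots> = 2 * K * \<eta> * integral {a..b} (\<lambda>r. norm (F r))" by simp
  finally show ?thesis .
qed

lemma ode_solution_matrix_inv:
  fixes X F :: "real \<Rightarrow> real^'n^'n"
  assumes ode: "ode_solution T X F" and inv: "\<And>s. s \<in> {0..T} \<Longrightarrow> invertible (X s)"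
  shows "ode_solution T (\<lambda>s. matrix_inv (X s)) (\<lambda>s. - (matrix_inv (X s) ** F s ** matrix_inv (X s)))"
proof -
  define Y where "Y s = matrix_inv (X s)" for s
  define G where "G s = Y s ** F s ** Y s" for s
  have FI: "set_integrable lborel {0..T} F" using ode unfolding ode_solution_def by blast
  have "continuous_on {0..T} X" using ode unfolding ode_solution_def by blast
  then have cY: "continuous_on {0..T} Y"
    unfolding Y_def using inv by (intro continuous_on_compose2[OF continuous_on_matrix_inv]) auto
  obtain K where K: "K \<ge> 0" "\<And>s. s \<in> {0..T} \<Longrightarrow> norm (Y s) \<le> K"
    using compact_imp_bounded[OF compact_continuous_image[OF cY compact_Icc]]
    unfolding bounded_pos by (metis image_eqI less_imp_le)
  have GI: "set_integrable lborel {0..T} G"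
    unfolding G_def by (rule set_integrable_matrix_sandwich[OF FI cY])
  have G_int: "G integrable_on {a..b}" if "0 \<le> a" "b \<le> T" for a b
    by (rule integrable_on_subinterval[OF set_borel_integral_eq_integral(1)[OF GI]]) (use that in auto)
  have nF_int: "(\<lambda>r. norm (F r)) integrable_on {a..b}" if "0 \<le> a" "b \<le> T" for a b
    by (rule integrable_on_subinterval[OF set_borel_integral_eq_integral(1)[OF set_integrable_norm[OF FI]]])
       (use that in auto)
  define N where "N u = integral {u..T} (\<lambda>r. norm (F r))" for u
  define \<psi> where "\<psi> u = Y u - Y T - integral {u..T} G" for u
  have N_diff: "N a - N b = integral {a..b} (\<lambda>r. norm (F r))" if ab: "0 \<le> a" "a \<le> b" "b \<le> T" for a b
  proof -
    have "integral {a..b} (\<lambda>r. norm (F r)) + integral {b..T} (\<lambda>r. norm (F r))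
        = integral {a..T} (\<lambda>r. norm (F r))"
      by (rule Henstock_Kurzweil_Integration.integral_combine) (use ab nF_int[of a T] in auto)
    then show ?thesis unfolding N_def by simp
  qed
  have step: "norm (\<psi> a - \<psi> b) \<le> 2 * K * \<eta> * (N a - N b)"
    if ab: "0 \<le> a" "a \<le> b" "b \<le> T"
      and near: "\<And>r. r \<in> {a..b} \<Longrightarrow> norm (Y a - Y r) \<le> \<eta> \<and> norm (Y b - Y r) \<le> \<eta>" for a b \<eta>
  proof -
    have combine: "integral {a..b} G + integral {b..T} G = integral {a..T} G"
      by (rule Henstock_Kurzweil_Integration.integral_combine) (use ab G_int[of a T] in auto)
    have "\<psi> a - \<psi> b = Y a - Y b - integral {a..b} G" unfolding \<psi>_def by (simp flip: combine)
    also have "norm \<dots> \<le> 2 * K * \<eta> * integral {a..b} (\<lambda>r. norm (F r))"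
      unfolding G_def Y_def
    proof (rule matrix_inv_increment_estimate[OF ode ab])
      show "invertible (X a)" "invertible (X b)" using inv ab by auto
      show "norm (matrix_inv (X r)) \<le> K" if "r \<in> {a..b}" for r
        using K(2)[of r] that ab by (simp add: Y_def)
      show "norm (matrix_inv (X a) - matrix_inv (X r)) \<le> \<eta> \<and> norm (matrix_inv (X b) - matrix_inv (X r)) \<le> \<eta>"
        if "r \<in> {a..b}" for r
        using near[OF that] by (simp add: Y_def)
      show "(\<lambda>r. matrix_inv (X r) ** F r ** matrix_inv (X r)) integrable_on {a..b}"
        using G_int[of a b] ab unfolding G_def[abs_def] Y_def[abs_def] by simp
    qed
    finally show ?thesis unfolding N_diff[OF ab] .
  qed
  have local: "\<exists>d>0. \<forall>a b. t \<le> a \<longrightarrow> a \<le> b \<longrightarrow> b \<le> T \<longrightarrow> b - a < d \<longrightarrow>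
      norm (\<psi> a - \<psi> b) \<le> e * (N a - N b)" if "0 \<le> t" "e > 0" for t e
  proof -
    define \<eta> where "\<eta> = e / (2 * K + 1)"
    have eta: "\<eta> > 0" "2 * K * \<eta> \<le> e" using \<open>e > 0\<close> K by (auto simp: \<eta>_def field_simps)
    obtain d where "d > 0"
      and dY: "\<And>x x'. x \<in> {0..T} \<Longrightarrow> x' \<in> {0..T} \<Longrightarrow> dist x' x < d \<Longrightarrow> dist (Y x') (Y x) < \<eta>"
      using compact_uniformly_continuous[OF cY compact_Icc] eta(1)
      unfolding uniformly_continuous_on_def by metis
    have "norm (\<psi> a - \<psi> b) \<le> e * (N a - N b)"
      if ab: "t \<le> a" "a \<le> b" "b \<le> T" "b - a < d" for a b
    proof -
      have "norm (Y a - Y r) \<le> \<eta> \<and> norm (Y b - Y r) \<le> \<eta>" if r: "r \<in> {a..b}" for r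
        using dY[of r a] dY[of r b] r ab \<open>0 \<le> t\<close> by (auto simp: dist_norm dist_real_def)
      then have "norm (\<psi> a - \<psi> b) \<le> 2 * K * \<eta> * (N a - N b)"
        using ab \<open>0 \<le> t\<close> by (intro step) auto
      also have "\<dots> \<le> e * (N a - N b)"
      proof (rule mult_right_mono)
        show "0 \<le> N a - N b"
          using N_diff[of a b] nF_int[of a b] ab \<open>0 \<le> t\<close> by (simp add: integral_nonneg)
      qed (use eta in simp)
      finally show ?thesis .
    qed
    then show ?thesis using \<open>d > 0\<close> by blast
  qed
  have "Y t = Y T - (LINT r:{t..T}|lborel. - G r)" if "t \<in> {0..T}" for t
  proof -
    have "\<psi> t = \<psi> T" using that by (intro eq_of_local_increment_bound[where N=N] local) auto
    moreover have "set_integrable lborel {t..T} G"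
      by (rule set_integrable_subset[OF GI]) (use that in auto)
    ultimately show ?thesis
      by (simp add: \<psi>_def set_integral_uminus set_borel_integral_eq_integral(2) algebra_simps)
  qed
  moreover have "set_integrable lborel {0..T} (\<lambda>s. - G s)"
    using GI unfolding set_integrable_def by (simp add: integrable_minus)
  ultimately show ?thesis
    using cY unfolding ode_solution_def Y_def[symmetric] G_def[symmetric] by blast
qed

section \<open>The Riccati right-hand sides\<close>

text \<open>In both right-hand sides the Markov-chain coupling term (the sum over \<open>k\<close> weighted by the
  generator) is passed as the separate argument \<open>S\<close>.\<close>

definition Sigma_rhs ::
    "('n::finite,'m1::finite,'m2::finite) coef \<Rightarrow> real^'n^'n \<Rightarrow> real^'n^'n \<Rightarrow> real^'n^'n" where
  "Sigma_rhs K X S = Ahat K ** X + X ** transpose (Ahat K) + X ** Gm K ** X - S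
     - Fhat_op K X ** matrix_inv (That_op K X) ** X ** transpose (Fhat_op K X)
     - Hhat_op K X ** matrix_inv (T22 K) ** transpose (Hhat_op K X)"

definition Plam_rhs ::
    "('n::finite,'m1::finite,'m2::finite) coef \<Rightarrow> real^'n^'n \<Rightarrow> real^'n^'n \<Rightarrow> real^'n^'n" where
  "Plam_rhs K X S = - (X ** Ahat K) - transpose (Ahat K) ** X - Gm K
     + transpose (transpose (Ftil K) ** X + S1til K)
       ** matrix_inv (T11til K + X) ** (transpose (Ftil K) ** X + S1til K)
     + transpose (transpose (Hhat K) ** X + Sm2 K)
       ** matrix_inv (T22 K) ** (transpose (Hhat K) ** X + Sm2 K)
     + S"

lemma That_op_matrix_inv:
  fixes P :: "real^'n^'n"
  assumes P: "invertible P" and PT: "invertible (P + T11til K)"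
  shows "invertible (That_op K (matrix_inv P))"
    "matrix_inv (That_op K (matrix_inv P)) ** matrix_inv P = matrix_inv (P + T11til K)"
    "matrix_inv (That_op K (matrix_inv P)) = mat 1 - matrix_inv (P + T11til K) ** T11til K"
proof -
  let ?X = "matrix_inv P" and ?T = "T11til K"
  have X: "invertible ?X" by (rule invertible_matrix_inv[OF P])
  have factor: "That_op K ?X = ?X ** (P + ?T)"
    by (simp add: That_op_def matrix_mult_distrib matrix_inv_left P matrix_mul_assoc)
  show "invertible (That_op K ?X)" unfolding factor by (rule invertible_mult[OF X PT])
  have inv: "matrix_inv (That_op K ?X) = matrix_inv (P + ?T) ** P"
    unfolding factor by (simp add: matrix_inv_mult X PT matrix_inv_matrix_inv P)
  show "matrix_inv (That_op K ?X) ** ?X = matrix_inv (P + ?T)"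
    unfolding inv by (simp add: matrix_inv_right P flip: matrix_mul_assoc)
  have "matrix_inv (P + ?T) ** P = matrix_inv (P + ?T) ** ((P + ?T) - ?T)" by simp
  also have "\<dots> = mat 1 - matrix_inv (P + ?T) ** ?T"
    by (simp only: matrix_mult_distrib(4) matrix_inv_left[OF PT])
  finally show "matrix_inv (That_op K ?X) = mat 1 - matrix_inv (P + ?T) ** ?T" using inv by simp
qed

lemma matrix_inv_sandwich:
  fixes P :: "real^'n^'n"
  assumes "invertible P"
  shows "matrix_inv P ** (P ** A) ** matrix_inv P = A ** matrix_inv P"
    "matrix_inv P ** (A ** P) ** matrix_inv P = matrix_inv P ** A"
proof -
  note XP = matrix_inv_left[OF assms] and PX = matrix_inv_right[OF assms]
  show "matrix_inv P ** (P ** A) ** matrix_inv P = A ** matrix_inv P"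
    by (simp add: matrix_mul_assoc XP)
  show "matrix_inv P ** (A ** P) ** matrix_inv P = matrix_inv P ** A"
    by (simp add: PX flip: matrix_mul_assoc)
qed

lemma matrix_inv_sandwich_quadratic:
  fixes P :: "real^'n^'n" and F :: "real^'k^'n" and S :: "real^'n^'k" and W :: "real^'k^'k"
  assumes P: "invertible P" "symm P"
  shows "matrix_inv P ** (transpose (transpose F ** P + S) ** W ** (transpose F ** P + S)) ** matrix_inv P
       = (F + matrix_inv P ** transpose S) ** W ** transpose (F + matrix_inv P ** transpose S)"
proof -
  let ?X = "matrix_inv P"
  have tP: "transpose P = P" using P(2) by (simp add: symm_def)
  have tX: "transpose ?X = ?X" using P by (simp add: symm_def flip: matrix_inv_transpose)
  have left: "?X ** transpose (transpose F ** P + S) = F + ?X ** transpose S"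
    using matrix_inv_left[OF P(1)] by (simp add: transpose_distrib tP matrix_mult_distrib matrix_mul_assoc)
  have right: "(transpose F ** P + S) ** ?X = transpose (F + ?X ** transpose S)"
    using matrix_inv_right[OF P(1)]
    by (simp add: transpose_distrib tX matrix_mult_distrib flip: matrix_mul_assoc)
  have "?X ** (transpose (transpose F ** P + S) ** W ** (transpose F ** P + S)) ** ?X
      = (?X ** transpose (transpose F ** P + S)) ** W ** ((transpose F ** P + S) ** ?X)"
    by (simp add: matrix_mul_assoc)
  then show ?thesis unfolding left right .
qed

lemma Sigma_rhs_matrix_inv:
  fixes P :: "real^'n^'n"
  assumes P: "invertible P" "symm P" and PT: "invertible (T11til K + P)"
  shows "- (matrix_inv P ** Plam_rhs K P (P ** S ** P) ** matrix_inv P) = Sigma_rhs K (matrix_inv P) S"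
proof -
  let ?X = "matrix_inv P"
  have "invertible (P + T11til K)" using PT by (simp add: add.commute)
  from That_op_matrix_inv(2)[OF P(1) this]
  have W: "matrix_inv (T11til K + P) = matrix_inv (That_op K ?X) ** ?X" by (simp add: add.commute)
  have "?X ** Plam_rhs K P (P ** S ** P) ** ?X
      = - (?X ** (P ** Ahat K) ** ?X) - (?X ** (transpose (Ahat K) ** P) ** ?X) - ?X ** Gm K ** ?X
        + ?X ** (transpose (transpose (Ftil K) ** P + S1til K)
                 ** matrix_inv (T11til K + P) ** (transpose (Ftil K) ** P + S1til K)) ** ?X
        + ?X ** (transpose (transpose (Hhat K) ** P + Sm2 K)
                 ** matrix_inv (T22 K) ** (transpose (Hhat K) ** P + Sm2 K)) ** ?X
        + ?X ** (P ** S ** P) ** ?X"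
    unfolding Plam_rhs_def by (simp only: matrix_mult_distrib)
  also have "\<dots> = - (Ahat K ** ?X) - ?X ** transpose (Ahat K) - ?X ** Gm K ** ?X
        + Fhat_op K ?X ** matrix_inv (That_op K ?X) ** ?X ** transpose (Fhat_op K ?X)
        + Hhat_op K ?X ** matrix_inv (T22 K) ** transpose (Hhat_op K ?X) + S"
    unfolding matrix_inv_sandwich[OF P(1)] matrix_inv_sandwich_quadratic[OF P] Fhat_op_def Hhat_op_def W
    by (simp add: matrix_mul_assoc matrix_inv_left[OF P(1)])
  finally show ?thesis unfolding Sigma_rhs_def by (simp add: algebra_simps)
qed

definition coef_size :: "('n::finite,'m1::finite,'m2::finite) coef \<Rightarrow> real" where
  "coef_size K = norm (Ahat K) + norm (Gm K) + norm (Ftil K) + norm (S1til K) + norm (Hhat K)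
     + norm (Sm2 K) + norm (T11til K) + norm (matrix_inv (T22 K))"

lemma norm_le_coef_size:
  "norm (Ahat K) \<le> coef_size K" "norm (Gm K) \<le> coef_size K" "norm (Ftil K) \<le> coef_size K"
  "norm (S1til K) \<le> coef_size K" "norm (Hhat K) \<le> coef_size K" "norm (Sm2 K) \<le> coef_size K"
  "norm (T11til K) \<le> coef_size K" "norm (matrix_inv (T22 K)) \<le> coef_size K"
  using norm_ge_zero[of "Ahat K"] norm_ge_zero[of "Gm K"] norm_ge_zero[of "Ftil K"]
    norm_ge_zero[of "S1til K"] norm_ge_zero[of "Hhat K"] norm_ge_zero[of "Sm2 K"]
    norm_ge_zero[of "T11til K"] norm_ge_zero[of "matrix_inv (T22 K)"]
  unfolding coef_size_def by linarith+

definition Sigma_rhs_bound :: "real \<Rightarrow> real \<Rightarrow> real \<Rightarrow> real \<Rightarrow> real" where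
  "Sigma_rhs_bound c x t \<sigma> =
     c * x + x * c + x * c * x + \<sigma> + (c + x * c) * t * x * (c + x * c) + (c + x * c) * c * (c + x * c)"

lemma norm_Sigma_rhs_le:
  assumes c: "coef_size K \<le> c" and x: "norm X \<le> x"
    and t: "norm (matrix_inv (That_op K X)) \<le> t" and \<sigma>: "norm S \<le> \<sigma>"
  shows "norm (Sigma_rhs K X S) \<le> Sigma_rhs_bound c x t \<sigma>"
proof -
  note coef = norm_le_coef_size[THEN order_trans, OF c]
  have F: "norm (Fhat_op K X) \<le> c + x * c" and H: "norm (Hhat_op K X) \<le> c + x * c"
    unfolding Fhat_op_def Hhat_op_def
    by (intro norm_triangle_le add_mono coef norm_matrix_mult_bound x, simp add: norm_transpose coef)+
  note bound = norm_matrix_mult_bound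
  show ?thesis unfolding Sigma_rhs_def Sigma_rhs_bound_def
    by (intro order_trans[OF norm_triangle_ineq4] order_trans[OF norm_triangle_ineq] add_mono
        bound coef x t \<sigma> F H) (simp_all add: norm_transpose coef F H)
qed

lemma Sigma_rhs_tendsto:
  assumes X: "(Xn \<longlongrightarrow> X) F" and S: "(Sn \<longlongrightarrow> S) F" and inv: "invertible (That_op K X)"
  shows "((\<lambda>n. Sigma_rhs K (Xn n) (Sn n)) \<longlongrightarrow> Sigma_rhs K X S) F"
proof -
  have "((\<lambda>n. That_op K (Xn n)) \<longlongrightarrow> That_op K X) F"
    unfolding That_op_def by (intro matrix_mult_tendsto tendsto_add tendsto_const X)
  then have "((\<lambda>n. matrix_inv (That_op K (Xn n))) \<longlongrightarrow> matrix_inv (That_op K X)) F"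
    by (rule isCont_tendsto_compose[OF isCont_matrix_inv[OF inv]])
  then show ?thesis unfolding Sigma_rhs_def Fhat_op_def Hhat_op_def
    by (intro matrix_mult_tendsto transpose_tendsto tendsto_add tendsto_diff tendsto_const X S)
qed

section \<open>Regularity of the coefficients\<close>

definition regular_coef :: "real \<Rightarrow> (real \<Rightarrow> ('n::finite,'m1::finite,'m2::finite) coef) \<Rightarrow> bool" where
  "regular_coef T K \<longleftrightarrow>
     borel_on {0..T} (\<lambda>s. Ahat (K s)) \<and> borel_on {0..T} (\<lambda>s. Gm (K s)) \<and>
     borel_on {0..T} (\<lambda>s. Ftil (K s)) \<and> borel_on {0..T} (\<lambda>s. S1til (K s)) \<and>
     borel_on {0..T} (\<lambda>s. Hhat (K s)) \<and> borel_on {0..T} (\<lambda>s. Sm2 (K s)) \<and>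
     borel_on {0..T} (\<lambda>s. T11til (K s)) \<and> borel_on {0..T} (\<lambda>s. T22 (K s)) \<and>
     ess_bounded {0..T} (\<lambda>s. coef_size (K s))"

lemma borel_on_Sigma_rhs:
  assumes "regular_coef T K" "borel_on {0..T} X" "borel_on {0..T} S"
  shows "borel_on {0..T} (\<lambda>s. Sigma_rhs (K s) (X s) (S s))"
  using assms unfolding regular_coef_def Sigma_rhs_def That_op_def Fhat_op_def Hhat_op_def
  by (intro borel_on_intros) auto

lemma regular_coef_mk_coef:
  assumes Linf: "Linf T (\<lambda>s. A s i)" "Linf T (\<lambda>s. B1 s i)" "Linf T (\<lambda>s. B2 s i)" "Linf T (\<lambda>s. C s i)"
      "Linf T (\<lambda>s. D1 s i)" "Linf T (\<lambda>s. D2 s i)" "Linf T (\<lambda>s. R1 s i)" "Linf T (\<lambda>s. R2 s i)"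
    and P: "continuous_on {0..T} (\<lambda>s. P s i)"
    and R1hat: "unif_pos T (\<lambda>s. R1hat (mk_coef A B1 B2 C D1 D2 R1 R2 P s i))"
    and T22: "unif_pos T (\<lambda>s. T22 (mk_coef A B1 B2 C D1 D2 R1 R2 P s i))"
  shows "regular_coef T (\<lambda>s. mk_coef A B1 B2 C D1 D2 R1 R2 P s i)"
proof -
  define K where "K s = mk_coef A B1 B2 C D1 D2 R1 R2 P s i" for s
  have fields: "(\<lambda>s. cA (K s)) = (\<lambda>s. A s i)" "(\<lambda>s. cB1 (K s)) = (\<lambda>s. B1 s i)"
    "(\<lambda>s. cB2 (K s)) = (\<lambda>s. B2 s i)" "(\<lambda>s. cC (K s)) = (\<lambda>s. C s i)"
    "(\<lambda>s. cD1 (K s)) = (\<lambda>s. D1 s i)" "(\<lambda>s. cD2 (K s)) = (\<lambda>s. D2 s i)"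
    "(\<lambda>s. cR1 (K s)) = (\<lambda>s. R1 s i)" "(\<lambda>s. cR2 (K s)) = (\<lambda>s. R2 s i)"
    "(\<lambda>s. cP (K s)) = (\<lambda>s. P s i)"
    by (simp_all add: K_def mk_coef_def)
  have borel_fields: "borel_on {0..T} (\<lambda>s. cA (K s))" "borel_on {0..T} (\<lambda>s. cB1 (K s))"
    "borel_on {0..T} (\<lambda>s. cB2 (K s))" "borel_on {0..T} (\<lambda>s. cC (K s))"
    "borel_on {0..T} (\<lambda>s. cD1 (K s))" "borel_on {0..T} (\<lambda>s. cD2 (K s))"
    "borel_on {0..T} (\<lambda>s. cR1 (K s))" "borel_on {0..T} (\<lambda>s. cR2 (K s))"
    "borel_on {0..T} (\<lambda>s. cP (K s))"
    unfolding fields using Linf borel_on_continuous_on[OF P] by (simp_all add: Linf_iff)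
  have bounded_fields: "ess_bounded {0..T} (\<lambda>s. cA (K s))" "ess_bounded {0..T} (\<lambda>s. cB1 (K s))"
    "ess_bounded {0..T} (\<lambda>s. cB2 (K s))" "ess_bounded {0..T} (\<lambda>s. cC (K s))"
    "ess_bounded {0..T} (\<lambda>s. cD1 (K s))" "ess_bounded {0..T} (\<lambda>s. cD2 (K s))"
    "ess_bounded {0..T} (\<lambda>s. cP (K s))"
    unfolding fields using Linf ess_bounded_continuous_on[OF P compact_Icc] by (simp_all add: Linf_iff)
  have bounded_inverses: "ess_bounded {0..T} (\<lambda>s. matrix_inv (R1hat (K s)))"
    "ess_bounded {0..T} (\<lambda>s. matrix_inv (T22 (K s)))"
    unfolding K_def by (rule unif_pos_matrix_inv(2)[OF R1hat], rule unif_pos_matrix_inv(2)[OF T22])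
  have "borel_on {0..T} (\<lambda>s. Ahat (K s)) \<and> borel_on {0..T} (\<lambda>s. Gm (K s)) \<and>
     borel_on {0..T} (\<lambda>s. Ftil (K s)) \<and> borel_on {0..T} (\<lambda>s. S1til (K s)) \<and>
     borel_on {0..T} (\<lambda>s. Hhat (K s)) \<and> borel_on {0..T} (\<lambda>s. Sm2 (K s)) \<and>
     borel_on {0..T} (\<lambda>s. T11til (K s)) \<and> borel_on {0..T} (\<lambda>s. T22 (K s))"
    unfolding Ahat_def Gm_def Ftil_def S1til_def Hhat_def Sm2_def T11til_def T22_def Chat_def
      S1hat_def R1hat_def Xi_def Sm1_def T11_def T12_def T21_def
    by (intro conjI borel_on_intros borel_fields)
  moreover have "ess_bounded {0..T} (\<lambda>s. Ahat (K s))" "ess_bounded {0..T} (\<lambda>s. Gm (K s))"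
    "ess_bounded {0..T} (\<lambda>s. Ftil (K s))" "ess_bounded {0..T} (\<lambda>s. S1til (K s))"
    "ess_bounded {0..T} (\<lambda>s. Hhat (K s))" "ess_bounded {0..T} (\<lambda>s. Sm2 (K s))"
    "ess_bounded {0..T} (\<lambda>s. T11til (K s))"
    unfolding Ahat_def Gm_def Ftil_def S1til_def Hhat_def Sm2_def T11til_def Chat_def
      S1hat_def Xi_def Sm1_def T11_def T12_def T21_def
    by (intro ess_bounded_matrix_mult ess_bounded_add ess_bounded_diff ess_bounded_transpose
        bounded_fields bounded_inverses)+
  then have "ess_bounded {0..T} (\<lambda>s. coef_size (K s))"
    unfolding coef_size_def by (intro ess_bounded_add ess_bounded_norm bounded_inverses)
  ultimately show ?thesis unfolding regular_coef_def K_def by blast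
qed

section \<open>Passing to the limit of large terminal values\<close>

lemma matrix_inv_antitone_limit:
  fixes P :: "nat \<Rightarrow> real^'n^'n"
  assumes pos: "\<And>n. posdef (P n)" and mono: "\<And>m n. m \<le> n \<Longrightarrow> psd (P n - P m)"
  shows "(\<lambda>n. matrix_inv (P n)) \<longlonglongrightarrow> lim (\<lambda>n. matrix_inv (P n))"
    "psd (lim (\<lambda>n. matrix_inv (P n)))"
    "\<And>n. norm (matrix_inv (P n)) \<le> real CARD('n) * real CARD('n) * norm (matrix_inv (P 0))"
proof -
  have psd: "psd (matrix_inv (P n))" for n by (rule psd_matrix_inv[OF pos])
  have antitone: "psd (matrix_inv (P m) - matrix_inv (P n))" if "m \<le> n" for m n
    by (rule psd_matrix_inv_antimono[OF pos pos mono[OF that]])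
  show lim: "(\<lambda>n. matrix_inv (P n)) \<longlonglongrightarrow> lim (\<lambda>n. matrix_inv (P n))"
    using psd_antitone_convergent[of "\<lambda>n. matrix_inv (P n)"] psd antitone[OF le_SucI[OF order_refl]]
    by (simp add: convergent_LIMSEQ_iff)
  show "psd (lim (\<lambda>n. matrix_inv (P n)))" by (rule psd_limit[OF lim psd])
  show "norm (matrix_inv (P n)) \<le> real CARD('n) * real CARD('n) * norm (matrix_inv (P 0))" for n
    by (rule psd_le_imp_norm_le[OF psd antitone]) simp
qed

lemma That_op_matrix_inv_bound:
  fixes P :: "real^'n^'n"
  assumes P: "invertible P" and \<delta>: "\<delta> > 0"
    and coercive: "\<And>x. \<delta> * (x \<bullet> x) \<le> x \<bullet> ((P + T11til K) *v x)"
  shows "invertible (P + T11til K)" "invertible (That_op K (matrix_inv P))"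
    "norm (matrix_inv (That_op K (matrix_inv P)))
       \<le> norm (mat 1 :: real^'n^'n) + real CARD('n) / \<delta> * norm (T11til K)"
proof -
  have "\<delta> * norm x \<le> norm ((P + T11til K) *v x)" for x
    using coercive \<delta> by (intro coercive_imp_bounded_below) auto
  note PT = bounded_below_imp_invertible[OF \<delta> this]
  show "invertible (P + T11til K)" by (rule PT(1))
  show "invertible (That_op K (matrix_inv P))" by (rule That_op_matrix_inv(1)[OF P PT(1)])
  have "norm (mat 1 - matrix_inv (P + T11til K) ** T11til K)
      \<le> norm (mat 1 :: real^'n^'n) + norm (matrix_inv (P + T11til K)) * norm (T11til K)"
    by (intro order_trans[OF norm_triangle_ineq4] add_mono order_refl norm_matrix_mult_le)
  also have "\<dots> \<le> norm (mat 1 :: real^'n^'n) + real CARD('n) / \<delta> * norm (T11til K)"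
    using PT(2) by (intro add_mono order_refl mult_right_mono) auto
  finally show "norm (matrix_inv (That_op K (matrix_inv P)))
       \<le> norm (mat 1 :: real^'n^'n) + real CARD('n) / \<delta> * norm (T11til K)"
    unfolding That_op_matrix_inv(3)[OF P PT(1)] .
qed

lemma norm_sum_scaleR_le:
  assumes "\<And>k. k \<in> A \<Longrightarrow> \<bar>a k\<bar> \<le> \<gamma>" "\<And>k. k \<in> A \<Longrightarrow> norm (Z k) \<le> B"
  shows "norm (\<Sum>k\<in>A. a k *\<^sub>R Z k) \<le> real (card A) * (\<gamma> * B)"
proof -
  have "norm (\<Sum>k\<in>A. a k *\<^sub>R Z k) \<le> (\<Sum>k\<in>A. \<bar>a k\<bar> * norm (Z k))"
    using norm_sum[of "\<lambda>k. a k *\<^sub>R Z k" A] by simp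
  also have "\<dots> \<le> real (card A) * (\<gamma> * B)"
    using assms by (intro sum_bounded_above mult_mono) (auto intro: order_trans[OF abs_ge_zero])
  finally show ?thesis .
qed

lemma Sigma_solution_matrix_inv:
  fixes K :: "real \<Rightarrow> 's::finite \<Rightarrow> ('n::finite,'m1::finite,'m2::finite) coef"
    and P :: "real \<Rightarrow> 's \<Rightarrow> real^'n^'n" and g :: "real \<Rightarrow> 's \<Rightarrow> 's \<Rightarrow> real"
  assumes coef: "regular_coef T (\<lambda>s. K s i)" and g: "\<And>k. Linf T (\<lambda>s. g s i k)"
    and pos: "\<And>s k. s \<in> {0..T} \<Longrightarrow> posdef (P s k)"
    and cont: "\<And>k. continuous_on {0..T} (\<lambda>s. P s k)"
    and ode: "ode_solution T (\<lambda>s. P s i) (\<lambda>s. Plam_rhs (K s i) (P s i)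
                 (\<Sum>k\<in>UNIV. g s i k *\<^sub>R (P s i ** matrix_inv (P s k) ** P s i)))"
    and inv: "AE s in lborel. s \<in> {0..T} \<longrightarrow> invertible (T11til (K s i) + P s i)"
  shows "ode_solution T (\<lambda>s. matrix_inv (P s i)) (\<lambda>s. Sigma_rhs (K s i) (matrix_inv (P s i))
           (\<Sum>k\<in>UNIV. g s i k *\<^sub>R matrix_inv (P s k)))"
proof (rule ode_solution_cong_AE[OF ode_solution_matrix_inv[OF ode]])
  show "invertible (P s i)" if "s \<in> {0..T}" for s using posdef_invertible pos[OF that] by blast
  have "borel_on {0..T} (\<lambda>s. matrix_inv (P s k))" for k
    using borel_on_continuous_on[OF cont] by (rule borel_on_matrix_inv)
  then show "borel_on {0..T} (\<lambda>s. Sigma_rhs (K s i) (matrix_inv (P s i))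
      (\<Sum>k\<in>UNIV. g s i k *\<^sub>R matrix_inv (P s k)))"
    using g by (intro borel_on_Sigma_rhs[OF coef] borel_on_sum borel_on_scaleR) (auto simp: Linf_iff)
  show "AE s in lborel. s \<in> {0..T} \<longrightarrow>
      - (matrix_inv (P s i) ** Plam_rhs (K s i) (P s i)
          (\<Sum>k\<in>UNIV. g s i k *\<^sub>R (P s i ** matrix_inv (P s k) ** P s i)) ** matrix_inv (P s i))
      = Sigma_rhs (K s i) (matrix_inv (P s i)) (\<Sum>k\<in>UNIV. g s i k *\<^sub>R matrix_inv (P s k))"
    using inv
  proof eventually_elim
    case (elim s)
    show ?case
    proof
      assume s: "s \<in> {0..T}"
      have "(\<Sum>k\<in>UNIV. g s i k *\<^sub>R (P s i ** matrix_inv (P s k) ** P s i))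
          = P s i ** (\<Sum>k\<in>UNIV. g s i k *\<^sub>R matrix_inv (P s k)) ** P s i"
        by (simp add: matrix_mult_distrib)
      then show "- (matrix_inv (P s i) ** Plam_rhs (K s i) (P s i)
          (\<Sum>k\<in>UNIV. g s i k *\<^sub>R (P s i ** matrix_inv (P s k) ** P s i)) ** matrix_inv (P s i))
          = Sigma_rhs (K s i) (matrix_inv (P s i)) (\<Sum>k\<in>UNIV. g s i k *\<^sub>R matrix_inv (P s k))"
        using Sigma_rhs_matrix_inv[OF posdef_invertible[OF pos[OF s]] _ elim[rule_format, OF s]]
          pos[OF s] by (simp add: posdef_def)
    qed
  qed
qed

lemma Sigma_rhs_pointwise_limit:
  fixes X :: "nat \<Rightarrow> 's::finite \<Rightarrow> real^'n::finite^'n" and g :: "'s \<Rightarrow> real"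
  assumes lim: "\<And>k. (\<lambda>n. X n k) \<longlonglongrightarrow> Y k" and bound: "\<And>n k. norm (X n k) \<le> B"
    and "C > 0" and That: "\<And>n. invertible (That_op K (X n i)) \<and> norm (matrix_inv (That_op K (X n i))) \<le> C"
    and c: "coef_size K \<le> c" and g: "\<And>k. \<bar>g k\<bar> \<le> \<gamma>"
  shows "invertible (That_op K (Y i))" "norm (matrix_inv (That_op K (Y i))) \<le> real CARD('n) * C"
    "norm (Sigma_rhs K (X n i) (\<Sum>k\<in>UNIV. g k *\<^sub>R X n k))
       \<le> Sigma_rhs_bound c B (real CARD('n) * C) (real CARD('s) * (\<gamma> * B))"
    "(\<lambda>n. Sigma_rhs K (X n i) (\<Sum>k\<in>UNIV. g k *\<^sub>R X n k)) \<longlonglongrightarrow> Sigma_rhs K (Y i) (\<Sum>k\<in>UNIV. g k *\<^sub>R Y k)"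
proof -
  have "(\<lambda>n. That_op K (X n i)) \<longlonglongrightarrow> That_op K (Y i)"
    unfolding That_op_def by (intro tendsto_add tendsto_const matrix_mult_tendsto lim)
  from invertible_limit[OF this \<open>C > 0\<close>] That
  show inv: "invertible (That_op K (Y i))" and "norm (matrix_inv (That_op K (Y i))) \<le> real CARD('n) * C"
    by auto
  have "C \<le> real CARD('n) * C" using \<open>C > 0\<close> by (simp add: mult_le_cancel_right1 Suc_le_eq)
  then show "norm (Sigma_rhs K (X n i) (\<Sum>k\<in>UNIV. g k *\<^sub>R X n k))
      \<le> Sigma_rhs_bound c B (real CARD('n) * C) (real CARD('s) * (\<gamma> * B))"
    using That[of n] c bound by (intro norm_Sigma_rhs_le norm_sum_scaleR_le g) auto
  show "(\<lambda>n. Sigma_rhs K (X n i) (\<Sum>k\<in>UNIV. g k *\<^sub>R X n k)) \<longlonglongrightarrow> Sigma_rhs K (Y i) (\<Sum>k\<in>UNIV. g k *\<^sub>R Y k)"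
    by (intro Sigma_rhs_tendsto lim tendsto_sum tendsto_scaleR tendsto_const inv)
qed

lemma Sigma_solution_limit:
  fixes K :: "real \<Rightarrow> 's::finite \<Rightarrow> ('n::finite,'m1::finite,'m2::finite) coef"
    and S :: "nat \<Rightarrow> real \<Rightarrow> 's \<Rightarrow> real^'n^'n" and g :: "real \<Rightarrow> 's \<Rightarrow> 's \<Rightarrow> real"
  assumes "0 \<le> T" and coef: "regular_coef T (\<lambda>s. K s i)" and g: "\<And>k. Linf T (\<lambda>s. g s i k)"
    and ode: "\<And>n. ode_solution T (\<lambda>s. S n s i)
                (\<lambda>s. Sigma_rhs (K s i) (S n s i) (\<Sum>k\<in>UNIV. g s i k *\<^sub>R S n s k))"
    and cont: "\<And>n k. continuous_on {0..T} (\<lambda>s. S n s k)"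
    and lim: "\<And>s k. s \<in> {0..T} \<Longrightarrow> (\<lambda>n. S n s k) \<longlonglongrightarrow> Sig s k"
    and bound: "\<And>n s k. s \<in> {0..T} \<Longrightarrow> norm (S n s k) \<le> B"
    and "C > 0"
    and That: "AE s in lborel. s \<in> {0..T} \<longrightarrow> (\<forall>n. invertible (That_op (K s i) (S n s i)) \<and>
                 norm (matrix_inv (That_op (K s i) (S n s i))) \<le> C)"
  shows "ode_solution T (\<lambda>s. Sig s i) (\<lambda>s. Sigma_rhs (K s i) (Sig s i) (\<Sum>k\<in>UNIV. g s i k *\<^sub>R Sig s k))"
    "AE s in lborel. s \<in> {0..T} \<longrightarrow> invertible (That_op (K s i) (Sig s i))"
    "Linf T (\<lambda>s. matrix_inv (That_op (K s i) (Sig s i)))"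
proof -
  have borel_Sig: "borel_on {0..T} (\<lambda>s. Sig s k)" for k
    by (rule borel_on_LIMSEQ[OF borel_closed[OF closed_atLeastAtMost] borel_on_continuous_on[OF cont] lim])
  have "ess_bounded {0..T} (\<lambda>s. coef_size (K s i))" using coef unfolding regular_coef_def by blast
  then obtain c where c: "AE s in lborel. s \<in> {0..T} \<longrightarrow> norm (coef_size (K s i)) \<le> c"
    by (rule ess_boundedE)
  have "ess_bounded {0..T} (\<lambda>s. \<Sum>k\<in>UNIV. norm (g s i k))"
    using g by (intro ess_bounded_sum ess_bounded_norm) (simp add: Linf_iff)
  then obtain \<gamma> where \<gamma>: "AE s in lborel. s \<in> {0..T} \<longrightarrow> norm (\<Sum>k\<in>UNIV. norm (g s i k)) \<le> \<gamma>"
    by (rule ess_boundedE)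
  define F where "F n s = Sigma_rhs (K s i) (S n s i) (\<Sum>k\<in>UNIV. g s i k *\<^sub>R S n s k)" for n s
  have "AE s in lborel. s \<in> {0..T} \<longrightarrow>
      invertible (That_op (K s i) (Sig s i)) \<and>
      norm (matrix_inv (That_op (K s i) (Sig s i))) \<le> real CARD('n) * C \<and>
      (\<forall>n. norm (F n s) \<le> Sigma_rhs_bound c B (real CARD('n) * C) (real CARD('s) * (\<gamma> * B))) \<and>
      (\<lambda>n. F n s) \<longlonglongrightarrow> Sigma_rhs (K s i) (Sig s i) (\<Sum>k\<in>UNIV. g s i k *\<^sub>R Sig s k)"
    using That c \<gamma>
  proof eventually_elim
    case (elim s)
    show ?case
    proof
      assume s: "s \<in> {0..T}"
      have That_s: "invertible (That_op (K s i) (S n s i)) \<and>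
          norm (matrix_inv (That_op (K s i) (S n s i))) \<le> C" for n
        using elim s by blast
      have c_s: "coef_size (K s i) \<le> c" using elim s by simp
      have g_s: "\<bar>g s i k\<bar> \<le> \<gamma>" for k
        using member_le_sum[of k UNIV "\<lambda>k. \<bar>g s i k\<bar>"] elim s by simp
      note pointwise = Sigma_rhs_pointwise_limit[where X="\<lambda>n k. S n s k" and Y="\<lambda>k. Sig s k"
          and g="\<lambda>k. g s i k", OF lim[OF s] bound[OF s] \<open>C > 0\<close> That_s c_s g_s]
      show "invertible (That_op (K s i) (Sig s i)) \<and>
          norm (matrix_inv (That_op (K s i) (Sig s i))) \<le> real CARD('n) * C \<and>
          (\<forall>n. norm (F n s) \<le> Sigma_rhs_bound c B (real CARD('n) * C) (real CARD('s) * (\<gamma> * B))) \<and>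
          (\<lambda>n. F n s) \<longlonglongrightarrow> Sigma_rhs (K s i) (Sig s i) (\<Sum>k\<in>UNIV. g s i k *\<^sub>R Sig s k)"
        unfolding F_def using pointwise by blast
    qed
  qed
  note good = this
  show "ode_solution T (\<lambda>s. Sig s i) (\<lambda>s. Sigma_rhs (K s i) (Sig s i) (\<Sum>k\<in>UNIV. g s i k *\<^sub>R Sig s k))"
  proof (rule ode_solution_limit[OF \<open>0 \<le> T\<close> ode[folded F_def]])
    show "(\<lambda>n. S n t i) \<longlonglongrightarrow> Sig t i" if "t \<in> {0..T}" for t using lim[OF that] .
    show "borel_on {0..T} (\<lambda>s. Sigma_rhs (K s i) (Sig s i) (\<Sum>k\<in>UNIV. g s i k *\<^sub>R Sig s k))"
      using g borel_Sig by (intro borel_on_Sigma_rhs[OF coef] borel_on_sum borel_on_scaleR) (auto simp: Linf_iff)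
  qed (use good in \<open>eventually_elim, blast\<close>)+
  show "AE s in lborel. s \<in> {0..T} \<longrightarrow> invertible (That_op (K s i) (Sig s i))"
    using good by eventually_elim blast
  have "borel_on {0..T} (\<lambda>s. matrix_inv (That_op (K s i) (Sig s i)))"
    using coef borel_Sig unfolding regular_coef_def That_op_def by (intro borel_on_intros) auto
  moreover have "AE s in lborel. s \<in> {0..T} \<longrightarrow>
      norm (matrix_inv (That_op (K s i) (Sig s i))) \<le> real CARD('n) * C"
    using good by eventually_elim blast
  then have "ess_bounded {0..T} (\<lambda>s. matrix_inv (That_op (K s i) (Sig s i)))"
    unfolding ess_bounded_def by blast
  ultimately show "Linf T (\<lambda>s. matrix_inv (That_op (K s i) (Sig s i)))" by (simp add: Linf_iff)
qed

lemma continuous_family_bounded: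
  fixes f :: "'k::finite \<Rightarrow> real \<Rightarrow> 'a::real_normed_vector"
  assumes "\<And>k. continuous_on {a..b} (f k)"
  obtains B where "\<And>s k. s \<in> {a..b} \<Longrightarrow> norm (f k s) \<le> B"
proof -
  have "continuous_on {a..b} (\<lambda>s. \<Sum>k\<in>UNIV. norm (f k s))"
    by (intro continuous_on_sum continuous_on_norm assms)
  then have "bounded ((\<lambda>s. \<Sum>k\<in>UNIV. norm (f k s)) ` {a..b})"
    by (rule compact_imp_bounded[OF compact_continuous_image[OF _ compact_Icc]])
  then obtain B where B: "\<forall>x\<in>(\<lambda>s. \<Sum>k\<in>UNIV. norm (f k s)) ` {a..b}. norm x \<le> B"
    unfolding bounded_iff by blast
  have "norm (f k s) \<le> B" if "s \<in> {a..b}" for s k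
  proof -
    have "norm (f k s) \<le> (\<Sum>k\<in>UNIV. norm (f k s))" by (rule member_le_sum) auto
    also have "\<dots> \<le> norm (\<Sum>k\<in>UNIV. norm (f k s))" by simp
    also have "\<dots> \<le> B" using B that by blast
    finally show ?thesis .
  qed
  then show ?thesis by (rule that)
qed

lemma That_op_uniform_bound:
  fixes P :: "nat \<Rightarrow> real \<Rightarrow> real^'n::finite^'n" and K :: "real \<Rightarrow> ('n,'m1::finite,'m2::finite) coef"
  assumes coef: "regular_coef T K" and pos: "\<And>n s. s \<in> {0..T} \<Longrightarrow> posdef (P n s)"
    and mono: "\<And>m n s. m \<le> n \<Longrightarrow> s \<in> {0..T} \<Longrightarrow> psd (P n s - P m s)"
    and coercive: "unif_pos T (\<lambda>s. P 0 s + T11til (K s))"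
  obtains C where "C > 0" "AE s in lborel. s \<in> {0..T} \<longrightarrow> (\<forall>n. invertible (T11til (K s) + P n s) \<and>
    invertible (That_op (K s) (matrix_inv (P n s))) \<and> norm (matrix_inv (That_op (K s) (matrix_inv (P n s)))) \<le> C)"
proof -
  obtain \<delta> where "\<delta> > 0" and \<delta>: "AE s in lborel. s \<in> {0..T} \<longrightarrow>
      (\<forall>x. \<delta> * (x \<bullet> x) \<le> x \<bullet> ((P 0 s + T11til (K s)) *v x))"
    using coercive unfolding unif_pos_def by blast
  have "ess_bounded {0..T} (\<lambda>s. coef_size (K s))" using coef unfolding regular_coef_def by blast
  then obtain c where "c \<ge> 0" and c: "AE s in lborel. s \<in> {0..T} \<longrightarrow> norm (coef_size (K s)) \<le> c"
    by (rule ess_boundedE)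
  define C where "C = norm (mat 1 :: real^'n^'n) + real CARD('n) / \<delta> * c + 1"
  have "AE s in lborel. s \<in> {0..T} \<longrightarrow> (\<forall>n. invertible (T11til (K s) + P n s) \<and>
      invertible (That_op (K s) (matrix_inv (P n s))) \<and> norm (matrix_inv (That_op (K s) (matrix_inv (P n s)))) \<le> C)"
    using \<delta> c
  proof eventually_elim
    case (elim s)
    show ?case
    proof (intro impI allI)
      fix n assume s: "s \<in> {0..T}"
      have "\<delta> * (x \<bullet> x) \<le> x \<bullet> ((P n s + T11til (K s)) *v x)" for x
      proof -
        have "0 \<le> x \<bullet> ((P n s - P 0 s) *v x)" using mono[OF _ s, of 0 n] by (simp add: psd_def)
        moreover have "\<delta> * (x \<bullet> x) \<le> x \<bullet> ((P 0 s + T11til (K s)) *v x)" using elim s by blast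
        ultimately show ?thesis
          by (simp add: matrix_vector_mult_add_rdistrib matrix_vector_mult_diff_rdistrib inner_add_right
              inner_diff_right)
      qed
      note That = That_op_matrix_inv_bound[OF posdef_invertible[OF pos[OF s]] \<open>\<delta> > 0\<close> this]
      have "norm (T11til (K s)) \<le> c"
        using norm_le_coef_size(7)[of "K s"] elim s by simp
      then have "real CARD('n) / \<delta> * norm (T11til (K s)) \<le> real CARD('n) / \<delta> * c"
        using \<open>\<delta> > 0\<close> by (intro mult_left_mono) auto
      then have "norm (mat 1 :: real^'n^'n) + real CARD('n) / \<delta> * norm (T11til (K s)) \<le> C"
        unfolding C_def by linarith
      then show "invertible (T11til (K s) + P n s) \<and> invertible (That_op (K s) (matrix_inv (P n s))) \<and>
          norm (matrix_inv (That_op (K s) (matrix_inv (P n s)))) \<le> C"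
        using That by (auto simp: add.commute)
    qed
  qed
  moreover have "C > 0" unfolding C_def using \<open>\<delta> > 0\<close> \<open>c \<ge> 0\<close> by (simp add: add_nonneg_pos)
  ultimately show ?thesis using that by blast
qed

lemma Sigma_solution_from_increasing_Plam:
  fixes K :: "real \<Rightarrow> 's::finite \<Rightarrow> ('n::finite,'m1::finite,'m2::finite) coef"
    and P :: "nat \<Rightarrow> real \<Rightarrow> 's \<Rightarrow> real^'n^'n" and g :: "real \<Rightarrow> 's \<Rightarrow> 's \<Rightarrow> real"
    and lam :: "nat \<Rightarrow> real"
  assumes "0 < T" and coef: "\<And>i. regular_coef T (\<lambda>s. K s i)" and g: "\<And>i k. Linf T (\<lambda>s. g s i k)"
    and pos: "\<And>n s i. s \<in> {0..T} \<Longrightarrow> posdef (P n s i)"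
    and mono: "\<And>m n s i. m \<le> n \<Longrightarrow> s \<in> {0..T} \<Longrightarrow> psd (P n s i - P m s i)"
    and terminal: "\<And>n i. P n T i = lam n *\<^sub>R mat 1" and lam: "filterlim lam at_top sequentially"
    and ode: "\<And>n i. ode_solution T (\<lambda>s. P n s i) (\<lambda>s. Plam_rhs (K s i) (P n s i)
                (\<Sum>k\<in>UNIV. g s i k *\<^sub>R (P n s i ** matrix_inv (P n s k) ** P n s i)))"
    and coercive: "\<And>i. unif_pos T (\<lambda>s. P 0 s i + T11til (K s i))"
  shows "\<exists>Sig. \<forall>i. (\<forall>s\<in>{0..T}. psd (Sig s i)) \<and> Sig T i = 0 \<and>
     ode_solution T (\<lambda>s. Sig s i) (\<lambda>s. Sigma_rhs (K s i) (Sig s i) (\<Sum>k\<in>UNIV. g s i k *\<^sub>R Sig s k)) \<and>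
     (AE s in lborel. s \<in> {0..T} \<longrightarrow> invertible (That_op (K s i) (Sig s i))) \<and>
     Linf T (\<lambda>s. matrix_inv (That_op (K s i) (Sig s i)))"
proof -
  define S where "S n s i = matrix_inv (P n s i)" for n s i
  define Sig where "Sig s i = lim (\<lambda>n. S n s i)" for s i
  have limit: "(\<lambda>n. S n s i) \<longlonglongrightarrow> Sig s i" "psd (Sig s i)"
    "norm (S n s i) \<le> real CARD('n) * real CARD('n) * norm (S 0 s i)" if "s \<in> {0..T}" for n s i
    using matrix_inv_antitone_limit[of "\<lambda>n. P n s i", OF pos[OF that] mono[OF _ that]]
    unfolding S_def Sig_def by auto
  have T: "T \<in> {0..T}" using \<open>0 < T\<close> by simp
  have cont: "continuous_on {0..T} (\<lambda>s. S n s k)" for n k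
  proof -
    have "continuous_on {0..T} (\<lambda>s. P n s k)" using ode[of n k] unfolding ode_solution_def by blast
    then show ?thesis unfolding S_def using posdef_invertible[OF pos]
      by (intro continuous_on_compose2[OF continuous_on_matrix_inv]) auto
  qed
  obtain B0 where B0: "\<And>s k. s \<in> {0..T} \<Longrightarrow> norm (S 0 s k) \<le> B0"
    using continuous_family_bounded[where f="\<lambda>k s. S 0 s k"] cont by blast
  have bound: "norm (S n s k) \<le> real CARD('n) * real CARD('n) * B0" if "s \<in> {0..T}" for n s k
    by (rule order_trans[OF limit(3)[OF that] mult_left_mono[OF B0[OF that]]]) simp
  have Sig_T: "Sig T i = 0" for i
  proof -
    have "(\<lambda>n. inverse (lam n) *\<^sub>R (mat 1 :: real^'n^'n)) \<longlonglongrightarrow> 0"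
      using tendsto_scaleR[OF tendsto_inverse_0_at_top[OF lam] tendsto_const] by simp
    moreover have "\<forall>\<^sub>F n in sequentially. lam n > 0" using lam by (simp add: filterlim_at_top_dense)
    then have "\<forall>\<^sub>F n in sequentially. inverse (lam n) *\<^sub>R mat 1 = S n T i"
      by eventually_elim (simp add: S_def terminal matrix_inv_scaleR_mat_1 divide_inverse)
    ultimately have "(\<lambda>n. S n T i) \<longlonglongrightarrow> 0" by (rule Lim_transform_eventually)
    then show ?thesis using limit(1)[OF T] LIMSEQ_unique by blast
  qed
  have "ode_solution T (\<lambda>s. Sig s i) (\<lambda>s. Sigma_rhs (K s i) (Sig s i) (\<Sum>k\<in>UNIV. g s i k *\<^sub>R Sig s k)) \<and>
      (AE s in lborel. s \<in> {0..T} \<longrightarrow> invertible (That_op (K s i) (Sig s i))) \<and>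
      Linf T (\<lambda>s. matrix_inv (That_op (K s i) (Sig s i)))" for i
  proof -
    obtain C where "C > 0" and good: "AE s in lborel. s \<in> {0..T} \<longrightarrow> (\<forall>n. invertible (T11til (K s i) + P n s i) \<and>
        invertible (That_op (K s i) (S n s i)) \<and> norm (matrix_inv (That_op (K s i) (S n s i))) \<le> C)"
      unfolding S_def using That_op_uniform_bound[OF coef, of "\<lambda>n s. P n s i"] pos mono coercive by blast
    have ode_S: "ode_solution T (\<lambda>s. S n s i)
        (\<lambda>s. Sigma_rhs (K s i) (S n s i) (\<Sum>k\<in>UNIV. g s i k *\<^sub>R S n s k))" for n
      unfolding S_def
    proof (rule Sigma_solution_matrix_inv[OF coef g pos _ ode])
      show "continuous_on {0..T} (\<lambda>s. P n s k)" for k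
        using ode[of n k] unfolding ode_solution_def by blast
      show "AE s in lborel. s \<in> {0..T} \<longrightarrow> invertible (T11til (K s i) + P n s i)"
        using good by eventually_elim blast
    qed
    have "AE s in lborel. s \<in> {0..T} \<longrightarrow> (\<forall>n. invertible (That_op (K s i) (S n s i)) \<and>
        norm (matrix_inv (That_op (K s i) (S n s i))) \<le> C)"
      using good by eventually_elim blast
    then show ?thesis
      using Sigma_solution_limit[where K=K and g=g and S=S and Sig=Sig and i=i,
          OF less_imp_le[OF \<open>0 < T\<close>] coef g ode_S cont limit(1) bound \<open>C > 0\<close>] by blast
  qed
  moreover have "psd (Sig s i)" if "s \<in> {0..T}" for s i by (rule limit(2)[OF that])
  ultimately show ?thesis using Sig_T by blast
qed

theorem theorem5p1:
  fixes T :: real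
    and gen :: "real \<Rightarrow> 's::finite \<Rightarrow> 's \<Rightarrow> real"
    and A C Q :: "real \<Rightarrow> 's \<Rightarrow> real^'n::finite^'n"
    and B1 D1 :: "real \<Rightarrow> 's \<Rightarrow> real^'m1::finite^'n"
    and B2 D2 :: "real \<Rightarrow> 's \<Rightarrow> real^'m2::finite^'n"
    and R1 :: "real \<Rightarrow> 's \<Rightarrow> real^'m1^'m1"
    and R2 :: "real \<Rightarrow> 's \<Rightarrow> real^'m2^'m2"
    and M :: "'s \<Rightarrow> real^'n^'n"
    and P :: "real \<Rightarrow> 's \<Rightarrow> real^'n^'n"
  assumes T_pos: "T > 0"
    and gen_Linf: "\<And>i j. Linf T (\<lambda>s. gen s i j)"
    and gen_offdiag: "\<And>s i j. s \<in> {0..T} \<Longrightarrow> i \<noteq> j \<Longrightarrow> 0 \<le> gen s i j"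
    and gen_rows: "\<And>s i. s \<in> {0..T} \<Longrightarrow> (\<Sum>j\<in>UNIV. gen s i j) = 0"
    and H1: "\<And>i. Linf T (\<lambda>s. A s i) \<and> Linf T (\<lambda>s. C s i) \<and> Linf T (\<lambda>s. B1 s i)
                 \<and> Linf T (\<lambda>s. D1 s i) \<and> Linf T (\<lambda>s. B2 s i) \<and> Linf T (\<lambda>s. D2 s i)"
    and H2: "\<And>i. Linf T (\<lambda>s. Q s i) \<and> Linf T (\<lambda>s. R1 s i) \<and> Linf T (\<lambda>s. R2 s i)
                 \<and> symm (M i)"
    and H2_sym: "\<And>s i. s \<in> {0..T} \<Longrightarrow> symm (Q s i) \<and> symm (R1 s i) \<and> symm (R2 s i)"
    and P_follower: "\<And>i. (\<forall>s\<in>{0..T}. symm (P s i)) \<and> P T i = M i \<and>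
          ode_solution T (\<lambda>s. P s i)
            (\<lambda>s. - (P s i ** A s i) - transpose (A s i) ** P s i
                 - transpose (C s i) ** P s i ** C s i
                 + transpose (S1hat (mk_coef A B1 B2 C D1 D2 R1 R2 P s i))
                   ** matrix_inv (R1hat (mk_coef A B1 B2 C D1 D2 R1 R2 P s i))
                   ** S1hat (mk_coef A B1 B2 C D1 D2 R1 R2 P s i)
                 - Q s i - (\<Sum>k\<in>UNIV. gen s i k *\<^sub>R P s k)) \<and>
          unif_pos T (\<lambda>s. R1hat (mk_coef A B1 B2 C D1 D2 R1 R2 P s i))"
    and T22_pos: "\<And>i. unif_pos T (\<lambda>s. T22 (mk_coef A B1 B2 C D1 D2 R1 R2 P s i))"
    and main: "\<exists>lam0>0. \<exists>Pl :: real \<Rightarrow> real \<Rightarrow> 's \<Rightarrow> real^'n^'n.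
       (\<forall>lam\<ge>lam0. \<forall>i.
          (\<forall>s\<in>{0..T}. posdef (Pl lam s i)) \<and> Pl lam T i = lam *\<^sub>R mat 1 \<and>
          ode_solution T (\<lambda>s. Pl lam s i)
            (\<lambda>s. let K = mk_coef A B1 B2 C D1 D2 R1 R2 P s i; X = Pl lam s i in
                 - (X ** Ahat K) - transpose (Ahat K) ** X - Gm K
                 + transpose (transpose (Ftil K) ** X + S1til K)
                   ** matrix_inv (T11til K + X) ** (transpose (Ftil K) ** X + S1til K)
                 + transpose (transpose (Hhat K) ** X + Sm2 K)
                   ** matrix_inv (T22 K) ** (transpose (Hhat K) ** X + Sm2 K)
                 + (\<Sum>k\<in>UNIV. gen s i k *\<^sub>R (X ** matrix_inv (Pl lam s k) ** X))) \<and>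
          unif_pos T (\<lambda>s. Pl lam s i + T11til (mk_coef A B1 B2 C D1 D2 R1 R2 P s i))) \<and>
       (\<forall>lam1 lam2 i. lam0 \<le> lam1 \<longrightarrow> lam1 < lam2 \<longrightarrow>
          (\<forall>s\<in>{0..T}. psd (Pl lam2 s i - Pl lam1 s i)))"
  shows "\<exists>Sig :: real \<Rightarrow> 's \<Rightarrow> real^'n^'n. \<forall>i.
     (\<forall>s\<in>{0..T}. psd (Sig s i)) \<and> Sig T i = 0 \<and>
     ode_solution T (\<lambda>s. Sig s i)
       (\<lambda>s. let K = mk_coef A B1 B2 C D1 D2 R1 R2 P s i; X = Sig s i in
            Ahat K ** X + X ** transpose (Ahat K) + X ** Gm K ** X
            - (\<Sum>k\<in>UNIV. gen s i k *\<^sub>R Sig s k)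
            - Fhat_op K X ** matrix_inv (That_op K X) ** X ** transpose (Fhat_op K X)
            - Hhat_op K X ** matrix_inv (T22 K) ** transpose (Hhat_op K X)) \<and>
     (AE s in lborel. s \<in> {0..T} \<longrightarrow>
        invertible (That_op (mk_coef A B1 B2 C D1 D2 R1 R2 P s i) (Sig s i))) \<and>
     Linf T (\<lambda>s. matrix_inv (That_op (mk_coef A B1 B2 C D1 D2 R1 R2 P s i) (Sig s i)))"
proof -
  define K where "K s i = mk_coef A B1 B2 C D1 D2 R1 R2 P s i" for s i
  obtain lam0 Pl where HP: "\<And>lam i. lam0 \<le> lam \<Longrightarrow> (\<forall>s\<in>{0..T}. posdef (Pl lam s i)) \<and> Pl lam T i = lam *\<^sub>R mat 1 \<and>
      ode_solution T (\<lambda>s. Pl lam s i) (\<lambda>s. Plam_rhs (K s i) (Pl lam s i)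
        (\<Sum>k\<in>UNIV. gen s i k *\<^sub>R (Pl lam s i ** matrix_inv (Pl lam s k) ** Pl lam s i))) \<and>
      unif_pos T (\<lambda>s. Pl lam s i + T11til (K s i))"
    and HM: "\<And>lam1 lam2 i s. lam0 \<le> lam1 \<Longrightarrow> lam1 < lam2 \<Longrightarrow> s \<in> {0..T} \<Longrightarrow>
      psd (Pl lam2 s i - Pl lam1 s i)"
    using main unfolding K_def Plam_rhs_def Let_def by blast
  have coef: "regular_coef T (\<lambda>s. K s i)" for i
  proof -
    have "continuous_on {0..T} (\<lambda>s. P s i)" using P_follower[of i] unfolding ode_solution_def by blast
    then show ?thesis unfolding K_def
      using H1[of i] H2[of i] P_follower[of i] T22_pos[of i] by (intro regular_coef_mk_coef) auto
  qed
  have "\<exists>Sig. \<forall>i. (\<forall>s\<in>{0..T}. psd (Sig s i)) \<and> Sig T i = 0 \<and>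
     ode_solution T (\<lambda>s. Sig s i) (\<lambda>s. Sigma_rhs (K s i) (Sig s i) (\<Sum>k\<in>UNIV. gen s i k *\<^sub>R Sig s k)) \<and>
     (AE s in lborel. s \<in> {0..T} \<longrightarrow> invertible (That_op (K s i) (Sig s i))) \<and>
     Linf T (\<lambda>s. matrix_inv (That_op (K s i) (Sig s i)))"
  proof (rule Sigma_solution_from_increasing_Plam[where P="\<lambda>n. Pl (lam0 + real n)" and lam="\<lambda>n. lam0 + real n"])
    show "psd (Pl (lam0 + real n) s i - Pl (lam0 + real m) s i)" if "m \<le> n" "s \<in> {0..T}" for m n s i
      using HM[of "lam0 + real m" "lam0 + real n" s i] psd_zero that by (cases "m = n") auto
    show "filterlim (\<lambda>n. lam0 + real n) at_top sequentially"
      by (rule filterlim_tendsto_add_at_top[OF tendsto_const filterlim_real_sequentially])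
  qed (use T_pos coef gen_Linf HP[of "lam0 + real _"] HP[of lam0] in auto)
  then show ?thesis unfolding K_def Sigma_rhs_def Let_def .
qed

end
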